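(* Let $k$ be an algebraically closed field of characteristic $0$ and let $v$ be a discrete valuation of $K_2=k((X_1,X_2))$ over $k$ (in the sense of the context) with value group $\mathbb{Z}$. Then, after a finite number of monoidal transformations and changes of coordinates, one obtains elements $Y_1,Y_2\in R_{\hat v}$ such that $k((Y_1,Y_2))\subset\widehat K_2$, the valuation $\hat v$ restricts to a valuation $v'$ of $k((Y_1,Y_2))$ extending $v$, and $v'$ is the usual order function of $k((Y_1,Y_2))$ (with respect to $Y_1,Y_2$).
   Context: $R_2=k[[X_1,X_2]]$ with maximal ideal $(X_1,X_2)$ and quotient field $K_2$. A discrete valuation of $K_2\mid k$ is a rank-one discrete valuation trivial on $k$ whose center in $R_2$ is $(X_1,X_2)$. $\widehat K_2$ is the completion of $K_2$ with respect to $v$, $\hat v$ the extension, $R_{\hat v}$ its valuation ring with maximal ideal $\mathfrak m_{\hat v}$. Monoidal transformation: $X_1\mapsto Y_1$, $X_2\mapsto Y_1Y_2$ (when $v(X_2)>v(X_1)$, variables possibly permuted); change of coordinates: $X_1\mapsto Y_1$, $X_2\mapsto Y_2+cY_1$ with $c\in R_{\hat v}\setminus\mathfrak m_{\hat v}$; new variables are regarded as elements of $R_{\hat v}$. The usual order function of $k((Y_1,Y_2))$ assigns to a nonzero power series its order (lowest total degree of a nonzero monomial), extended to the quotient field. *)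

theory Defs
  imports "HOL-Computational_Algebra.Computational_Algebra"
begin

text \<open>R_2 = k[[X_1,X_2]] is the type 'k fps fps: an element f has coefficient
  f $ j $ i at the monomial X_1^i X_2^j; thus X_1 = fps_const fps_X and X_2 = fps_X.
  A discrete valuation with value group Z of K_2 = Frac(R_2) is determined by its
  restriction to R_2 minus 0; we record it as an int-valued function on R_2
  (the value at 0 is irrelevant, infinity by convention).\<close>

definition alg_closed_type :: "'k::field itself \<Rightarrow> bool" where
  "alg_closed_type _ \<longleftrightarrow> (\<forall>p::'k poly. 0 < degree p \<longrightarrow> (\<exists>x. poly p x = 0))"

abbreviation X1 :: "'k::field fps fps" where "X1 \<equiv> fps_const fps_X"
abbreviation X2 :: "'k::field fps fps" where "X2 \<equiv> fps_X"

text \<open>v is (the restriction to R_2 of) a discrete valuation of K_2 over k whose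
  center in R_2 is the maximal ideal (X_1,X_2).\<close>
definition discrete_val_R2 :: "('k::field fps fps \<Rightarrow> int) \<Rightarrow> bool" where
  "discrete_val_R2 v \<longleftrightarrow>
     (\<forall>f g. f \<noteq> 0 \<longrightarrow> g \<noteq> 0 \<longrightarrow> v (f * g) = v f + v g) \<and>
     (\<forall>f g. f \<noteq> 0 \<longrightarrow> g \<noteq> 0 \<longrightarrow> f + g \<noteq> 0 \<longrightarrow> min (v f) (v g) \<le> v (f + g)) \<and>
     (\<forall>c. c \<noteq> 0 \<longrightarrow> v (fps_const (fps_const c)) = 0) \<and>
     (\<forall>f. f \<noteq> 0 \<longrightarrow> 0 \<le> v f) \<and>
     (\<forall>f. f \<noteq> 0 \<longrightarrow> (0 < v f \<longleftrightarrow> f $ 0 $ 0 = 0))"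

text \<open>The value group v(K_2^*) = {v f - v g} is all of Z.\<close>
definition value_group_Z :: "('k::field fps fps \<Rightarrow> int) \<Rightarrow> bool" where
  "value_group_Z v \<longleftrightarrow> (\<exists>f g. f \<noteq> 0 \<and> g \<noteq> 0 \<and> v f = v g + 1)"

definition vge :: "('L::field \<Rightarrow> int) \<Rightarrow> 'L \<Rightarrow> int \<Rightarrow> bool" where
  "vge w x N \<longleftrightarrow> x = 0 \<or> N \<le> w x"

definition is_valuation :: "('L::field \<Rightarrow> int) \<Rightarrow> bool" where
  "is_valuation w \<longleftrightarrow>
     (\<forall>x y. x \<noteq> 0 \<longrightarrow> y \<noteq> 0 \<longrightarrow> w (x * y) = w x + w y) \<and>
     (\<forall>x y. x \<noteq> 0 \<longrightarrow> y \<noteq> 0 \<longrightarrow> x + y \<noteq> 0 \<longrightarrow> min (w x) (w y) \<le> w (x + y))"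

definition v_cauchy :: "('L::field \<Rightarrow> int) \<Rightarrow> (nat \<Rightarrow> 'L) \<Rightarrow> bool" where
  "v_cauchy w s \<longleftrightarrow> (\<forall>N. \<exists>M. \<forall>m\<ge>M. \<forall>n\<ge>M. vge w (s m - s n) N)"

definition v_conv :: "('L::field \<Rightarrow> int) \<Rightarrow> (nat \<Rightarrow> 'L) \<Rightarrow> 'L \<Rightarrow> bool" where
  "v_conv w s l \<longleftrightarrow> (\<forall>N. \<exists>M. \<forall>n\<ge>M. vge w (s n - l) N)"

text \<open>(L, iota, w) is the completion of K_2 = Frac(R_2) with respect to v:
  iota is an injective ring homomorphism R_2 -> L (hence extends to K_2),
  w is a valuation on L extending v, L is complete, and K_2 is dense in L.
  This determines (L, w) up to unique isomorphism over K_2.\<close>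
definition is_completion ::
  "('k::field fps fps \<Rightarrow> int) \<Rightarrow> ('k fps fps \<Rightarrow> 'L::field) \<Rightarrow> ('L \<Rightarrow> int) \<Rightarrow> bool" where
  "is_completion v \<iota> w \<longleftrightarrow>
     \<iota> 0 = 0 \<and> \<iota> 1 = 1 \<and> (\<forall>f g. \<iota> (f + g) = \<iota> f + \<iota> g) \<and>
     (\<forall>f g. \<iota> (f * g) = \<iota> f * \<iota> g) \<and> inj \<iota> \<and>
     is_valuation w \<and>
     (\<forall>f. f \<noteq> 0 \<longrightarrow> w (\<iota> f) = v f) \<and>
     (\<forall>s. v_cauchy w s \<longrightarrow> (\<exists>l. v_conv w s l)) \<and>
     (\<forall>x N. \<exists>f g. g \<noteq> 0 \<and> vge w (x - \<iota> f / \<iota> g) N)"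

text \<open>For the change of coordinates,
  c ranges over the units of the valuation ring R_w, i.e. c \<noteq> 0, w c = 0.\<close>
inductive transf :: "('L::field \<Rightarrow> int) \<Rightarrow> 'L \<times> 'L \<Rightarrow> 'L \<times> 'L \<Rightarrow> bool" for w where
  monoidal1: "x1 \<noteq> 0 \<Longrightarrow> x2 \<noteq> 0 \<Longrightarrow> w x1 < w x2 \<Longrightarrow> transf w (x1, x2) (x1, x2 / x1)"
| monoidal2: "x1 \<noteq> 0 \<Longrightarrow> x2 \<noteq> 0 \<Longrightarrow> w x2 < w x1 \<Longrightarrow> transf w (x1, x2) (x1 / x2, x2)"
| coord1: "c \<noteq> 0 \<Longrightarrow> w c = 0 \<Longrightarrow> transf w (x1, x2) (x1, x2 - c * x1)"
| coord2: "c \<noteq> 0 \<Longrightarrow> w c = 0 \<Longrightarrow> transf w (x1, x2) (x1 - c * x2, x2)"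

text \<open>The power series f(Y_1,Y_2) (f in k[[T_1,T_2]], coefficient of T_1^i T_2^j is
  f $ j $ i) converges in L to l; k is embedded in L via iota.\<close>
definition ps_eval ::
  "('k::field fps fps \<Rightarrow> 'L::field) \<Rightarrow> ('L \<Rightarrow> int) \<Rightarrow> 'L \<Rightarrow> 'L \<Rightarrow> 'k fps fps \<Rightarrow> 'L \<Rightarrow> bool" where
  "ps_eval \<iota> w Y1 Y2 f l \<longleftrightarrow>
     v_conv w (\<lambda>n. \<Sum>i\<le>n. \<Sum>j\<le>n - i. \<iota> (fps_const (fps_const (f $ j $ i))) * Y1 ^ i * Y2 ^ j) l"

definition ord2 :: "'k::zero fps fps \<Rightarrow> nat" where
  "ord2 f = (LEAST d. \<exists>i j. i + j = d \<and> f $ j $ i \<noteq> 0)"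

end

theory Submission
  imports Defs
begin

text \<open>Monoidal transformations and changes of coordinates starting from (\<iota> X1, \<iota> X2) produce
  pairs (Y1, Y2) of positive value such that \<iota> X1 and \<iota> X2 lie in k[Y1, Y2]. Choose such a pair
  for which min (w Y1) (w Y2) is minimal. If no reachable pair has w Y1 = w Y2 and w (Y2 - c Y1) = w Y1
  for all c in k^*, then from the minimal pair one can keep dividing by the coordinate of minimal value
  and subtracting constants, which expands the other coordinate as a power series in it; X1 and X2 would
  then be power series in a single element, impossible since k[[t]] is algebraic over k[[G]] for every
  nonconstant G. For a pair of the good kind, the initial form of f(Y1, Y2) factors into linear forms
  Y2 - c Y1, all of value w Y1 because k is algebraically closed, so w (f(Y1, Y2)) = w Y1 * ord f. Hence
  f \<mapsto> f(Y1, Y2) has closed image, which contains the dense subring k[X1, X2] and so all of R_2;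
  thus v only takes multiples of w Y1, and value group Z forces w Y1 = 1.\<close>

section \<open>Formal power series\<close>

lemma ord2_nonzero_coeff: "f \<noteq> 0 \<Longrightarrow> \<exists>i j. i + j = ord2 f \<and> f $ j $ i \<noteq> 0"
proof -
  assume "f \<noteq> 0"
  then obtain i j where "f $ j $ i \<noteq> 0" by (metis fps_ext fps_zero_nth)
  then have "\<exists>d i j. i + j = d \<and> f $ j $ i \<noteq> 0" by blast
  then show ?thesis unfolding ord2_def by (rule LeastI_ex)
qed

lemma nth_nth_eq_0_if_less_ord2: "i + j < ord2 f \<Longrightarrow> f $ j $ i = 0"
  unfolding ord2_def using not_less_Least by blast

lemma ord2_le: "f $ j $ i \<noteq> 0 \<Longrightarrow> ord2 f \<le> i + j"
  unfolding ord2_def by (rule Least_le) blast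

lemma sum_atMost_Suc_remove:
  assumes "p \<le> Suc n"
  shows "(\<Sum>j\<le>Suc n. f j) = f p + (\<Sum>i\<le>n. f (if i < p then i else Suc i))"
proof -
  let ?skip = "\<lambda>i. if i < p then i else Suc i"
  have img: "{..Suc n} - {p} = ?skip ` {..n}"
  proof (intro equalityI subsetI)
    fix j assume "j \<in> {..Suc n} - {p}"
    then show "j \<in> ?skip ` {..n}"
      using assms by (intro image_eqI[of _ _ "if j < p then j else j - 1"]) auto
  qed (use assms in auto)
  have inj: "inj_on ?skip {..n}"
    by (auto simp: inj_on_def split: if_splits)
  have "(\<Sum>j\<le>Suc n. f j) = f p + sum f ({..Suc n} - {p})"
    using assms by (subst sum.remove) auto
  also have "\<dots> = f p + (\<Sum>i\<le>n. f (?skip i))"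
    unfolding img sum.reindex[OF inj] by simp
  finally show ?thesis .
qed

lemma additive_map_simps:
  fixes \<sigma> :: "'a::ab_group_add \<Rightarrow> 'b::ab_group_add"
  assumes add: "\<And>a b. \<sigma> (a + b) = \<sigma> a + \<sigma> b"
  shows "\<sigma> 0 = 0" "\<sigma> (- a) = - \<sigma> a" "\<sigma> (a - b) = \<sigma> a - \<sigma> b"
    "\<sigma> (sum f B) = (\<Sum>x\<in>B. \<sigma> (f x))"
proof -
  show zero: "\<sigma> 0 = 0" using add[of 0 0] by simp
  show minus: "\<sigma> (- a) = - \<sigma> a" for a
  proof -
    have "\<sigma> a + \<sigma> (- a) = 0" using add[of a "- a"] zero by simp
    then show ?thesis by (simp add: eq_neg_iff_add_eq_0 add.commute)
  qed
  show "\<sigma> (a - b) = \<sigma> a - \<sigma> b" using add[of a "- b"] minus[of b] by simp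
  show "\<sigma> (sum f B) = (\<Sum>x\<in>B. \<sigma> (f x))"
    by (induction B rule: infinite_finite_induct) (simp_all add: zero add)
qed

text \<open>The n + 1 combinations eliminate y p against the pivot \<alpha>; a relation among them lifts to
  one among y 0, ..., y (Suc n).\<close>
lemma nontrivial_relation_from_pivot_elimination:
  fixes \<sigma> :: "'a::idom \<Rightarrow> 'b::comm_ring_1"
  assumes \<sigma>_add: "\<And>a b. \<sigma> (a + b) = \<sigma> a + \<sigma> b"
    and \<sigma>_mult: "\<And>a b. \<sigma> (a * b) = \<sigma> a * \<sigma> b"
    and p: "p \<le> Suc n" "\<alpha> \<noteq> 0" and c': "i0 \<le> n" "c' i0 \<noteq> 0"
    and rel: "(\<Sum>i\<le>n. \<sigma> (c' i) * (\<sigma> \<alpha> * y (if i < p then i else Suc i) - \<sigma> (\<beta> i) * y p)) = 0"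
  shows "\<exists>c. (\<exists>i\<le>Suc n. c i \<noteq> 0) \<and> (\<Sum>i\<le>Suc n. \<sigma> (c i) * y i) = 0"
proof -
  note \<sigma>_simps = additive_map_simps[of \<sigma>, OF \<sigma>_add]
  define skip where "skip i = (if i < p then i else Suc i)" for i
  define c where "c j = (if j = p then - (\<Sum>i\<le>n. c' i * \<beta> i) else \<alpha> * c' (if j < p then j else j - 1))" for j
  have c_skip: "c (skip i) = \<alpha> * c' i" for i by (simp add: c_def skip_def)
  have "(\<Sum>j\<le>Suc n. \<sigma> (c j) * y j) = \<sigma> (c p) * y p + (\<Sum>i\<le>n. \<sigma> (c (skip i)) * y (skip i))"
    unfolding skip_def by (rule sum_atMost_Suc_remove[OF p(1)])
  also have "\<sigma> (c p) * y p = - (\<Sum>i\<le>n. \<sigma> (c' i) * (\<sigma> (\<beta> i) * y p))"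
    by (simp add: c_def \<sigma>_simps \<sigma>_mult sum_distrib_left sum_distrib_right mult_ac)
  also have "(\<Sum>i\<le>n. \<sigma> (c (skip i)) * y (skip i)) = (\<Sum>i\<le>n. \<sigma> (c' i) * (\<sigma> \<alpha> * y (skip i)))"
    by (simp add: c_skip \<sigma>_mult mult_ac)
  also have "- (\<Sum>i\<le>n. \<sigma> (c' i) * (\<sigma> (\<beta> i) * y p)) + \<dots> = 0"
    using rel by (simp add: skip_def right_diff_distrib sum_subtractf)
  finally have "(\<Sum>j\<le>Suc n. \<sigma> (c j) * y j) = 0" .
  moreover have "skip i0 \<le> Suc n" using c'(1) by (simp add: skip_def)
  moreover have "c (skip i0) \<noteq> 0" using c'(2) p(2) by (simp add: c_skip)
  ultimately show ?thesis by blast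
qed

lemma nontrivial_relation_if_fewer_generators:
  fixes \<sigma> :: "'a::idom \<Rightarrow> 'b::comm_ring_1" and g :: "nat \<Rightarrow> 'b"
  assumes \<sigma>_add: "\<And>a b. \<sigma> (a + b) = \<sigma> a + \<sigma> b"
    and \<sigma>_mult: "\<And>a b. \<sigma> (a * b) = \<sigma> a * \<sigma> b"
  shows "(\<And>i. i \<le> n \<Longrightarrow> y i = (\<Sum>r<n. \<sigma> (A i r) * g r)) \<Longrightarrow>
         \<exists>c. (\<exists>i\<le>n. c i \<noteq> 0) \<and> (\<Sum>i\<le>n. \<sigma> (c i) * y i) = 0"
proof (induction n arbitrary: A y)
  case 0
  then have "y 0 = 0" by simp
  then show ?case by (intro exI[of _ "\<lambda>_. 1"]) auto
next
  case (Suc n)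
  note \<sigma>_simps = additive_map_simps[of \<sigma>, OF \<sigma>_add]
  show ?case
  proof (cases "\<forall>i\<le>Suc n. A i n = 0")
    case True
    have "y i = (\<Sum>r<n. \<sigma> (A i r) * g r)" if "i \<le> n" for i
    proof -
      have "y i = (\<Sum>r<Suc n. \<sigma> (A i r) * g r)" using Suc.prems that by simp
      moreover have "A i n = 0" using True that by simp
      ultimately show ?thesis by (simp add: \<sigma>_simps)
    qed
    then obtain c where c: "\<exists>i\<le>n. c i \<noteq> 0" "(\<Sum>i\<le>n. \<sigma> (c i) * y i) = 0"
      using Suc.IH by blast
    show ?thesis
    proof (intro exI[of _ "c(Suc n := 0)"] conjI)
      show "\<exists>i\<le>Suc n. (c(Suc n := 0)) i \<noteq> 0"
        using c(1) by (metis fun_upd_other le_SucI not_less_eq_eq)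
      show "(\<Sum>i\<le>Suc n. \<sigma> ((c(Suc n := 0)) i) * y i) = 0"
        using c(2) by (simp add: \<sigma>_simps)
    qed
  next
    case False
    then obtain p where p: "p \<le> Suc n" "A p n \<noteq> 0" by blast
    define skip where "skip i = (if i < p then i else Suc i)" for i
    define y' where "y' i = \<sigma> (A p n) * y (skip i) - \<sigma> (A (skip i) n) * y p" for i
    define A' where "A' i r = A p n * A (skip i) r - A (skip i) n * A p r" for i r
    have "y' i = (\<Sum>r<n. \<sigma> (A' i r) * g r)" if "i \<le> n" for i
    proof -
      let ?a = "\<sigma> (A p n)" and ?b = "\<sigma> (A (skip i) n)"
      have "skip i \<le> Suc n" using that by (simp add: skip_def)
      then have "y' i = ?a * (\<Sum>r<Suc n. \<sigma> (A (skip i) r) * g r) - ?b * (\<Sum>r<Suc n. \<sigma> (A p r) * g r)"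
        unfolding y'_def using Suc.prems p(1) by simp
      also have "\<dots> = ?a * (\<Sum>r<n. \<sigma> (A (skip i) r) * g r) - ?b * (\<Sum>r<n. \<sigma> (A p r) * g r)"
        by (simp only: sum.lessThan_Suc distrib_left) (simp add: mult_ac)
      also have "\<dots> = (\<Sum>r<n. (?a * \<sigma> (A (skip i) r) - ?b * \<sigma> (A p r)) * g r)"
        by (simp only: sum_distrib_left left_diff_distrib sum_subtractf mult.assoc)
      finally show ?thesis by (simp add: A'_def \<sigma>_mult \<sigma>_simps)
    qed
    then obtain c' where "\<exists>i\<le>n. c' i \<noteq> 0" "(\<Sum>i\<le>n. \<sigma> (c' i) * y' i) = 0"
      using Suc.IH[of y' A'] by blast
    then show ?thesis
      using nontrivial_relation_from_pivot_elimination[OF \<sigma>_add \<sigma>_mult p, where \<beta> = "\<lambda>i. A (skip i) n"]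
      unfolding y'_def skip_def by blast
  qed
qed

lemma fps_compose_X_power_nth:
  assumes "0 < a"
  shows "(c oo fps_X ^ a) $ m = (if a dvd m then c $ (m div a) else (0 :: 'k :: field))"
proof -
  have "(c oo fps_X ^ a) $ m = (\<Sum>i=0..m. c $ i * (if m = a * i then 1 else 0))"
    by (simp add: fps_compose_nth power_mult[symmetric])
  also have "\<dots> = (\<Sum>i=0..m. if i = m div a then (if a dvd m then c $ i else 0) else 0)"
    by (rule sum.cong[OF refl]) (use assms in auto)
  also have "\<dots> = (if a dvd m then c $ (m div a) else 0)"
    by (subst sum.delta) (auto simp: div_le_dividend)
  finally show ?thesis .
qed

definition fps_section :: "nat \<Rightarrow> 'k fps \<Rightarrow> nat \<Rightarrow> 'k fps" where
  "fps_section a h r = Abs_fps (\<lambda>n. h $ (a * n + r))"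

lemma fps_sum_sections:
  assumes a: "0 < a"
  shows "h = (\<Sum>r<a. (fps_section a h r oo fps_X ^ a) * fps_X ^ r :: 'k :: field fps)"
proof (rule fps_ext)
  fix m
  have nth_summand: "((fps_section a h r oo fps_X ^ a) * fps_X ^ r) $ m = (if r = m mod a then h $ m else 0)"
    if r: "r < a" for r
  proof (cases "r = m mod a")
    case True
    then have le: "r \<le> m" and e: "m - r = a * (m div a)" by (simp_all add: minus_mod_eq_mult_div)
    have "((fps_section a h r oo fps_X ^ a) * fps_X ^ r) $ m = (fps_section a h r oo fps_X ^ a) $ (m - r)"
      using le by (simp add: fps_X_power_mult_right_nth)
    also have "\<dots> = h $ (a * (m div a) + r)"
      using e a by (simp add: fps_compose_X_power_nth fps_section_def)
    finally show ?thesis using True by simp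
  next
    case False
    have "\<not> (r \<le> m \<and> a dvd (m - r))"
    proof
      assume "r \<le> m \<and> a dvd (m - r)"
      then obtain k where "m = a * k + r" by (metis dvdE le_add_diff_inverse2)
      then show False using False r by simp
    qed
    then show ?thesis
      using False a by (auto simp: fps_X_power_mult_right_nth fps_compose_X_power_nth)
  qed
  have "(\<Sum>r<a. (fps_section a h r oo fps_X ^ a) * fps_X ^ r) $ m = (\<Sum>r<a. if r = m mod a then h $ m else 0)"
    unfolding fps_sum_nth by (rule sum.cong[OF refl]) (simp add: nth_summand)
  also have "\<dots> = h $ m" using a by (subst sum.delta) auto
  finally show "h $ m = (\<Sum>r<a. (fps_section a h r oo fps_X ^ a) * fps_X ^ r) $ m" by simp
qed

lemma fps_power_nth_eq_0_if_less:
  assumes "G $ 0 = 0" "k < i"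
  shows "(G ^ i) $ k = (0 :: 'k :: field)"
proof -
  have "G = fps_X * fps_shift 1 G" by (rule fps_ext) (simp add: assms(1))
  then have "G ^ i = fps_X ^ i * fps_shift 1 G ^ i" by (metis power_mult_distrib)
  then show ?thesis using assms(2) by (simp add: fps_X_power_mult_nth)
qed

lemma fps_const_sum: "fps_const (sum f A) = (\<Sum>x\<in>A. fps_const (f x))"
  by (induction A rule: infinite_finite_induct) (simp_all flip: fps_const_add)

lemma fps_root_of_order_one:
  fixes G :: "'k::field_char_0 fps"
  assumes k: "alg_closed_type TYPE('k)" and G: "G $ 0 = 0" "G \<noteq> 0"
  shows "\<exists>S. S $ 0 = 0 \<and> S $ 1 \<noteq> 0 \<and> S ^ subdegree G = G"
proof -
  define a where "a = subdegree G"
  have a0: "0 < a" using G subdegree_eq_0_iff[of G] by (simp add: a_def)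
  define u where "u = fps_shift a G"
  have u0: "u $ 0 \<noteq> 0" using G by (simp add: u_def a_def)
  have Gu: "G = u * fps_X ^ a" unfolding u_def a_def by (rule subdegree_decompose)
  have "degree (monom 1 a + [:- (u $ 0):]) = a"
    using a0 by (subst degree_add_eq_left) (simp_all add: degree_monom_eq)
  then obtain r0 where "poly (monom 1 a + [:- (u $ 0):]) r0 = 0"
    using k a0 unfolding alg_closed_type_def by metis
  then have r0: "r0 ^ a = u $ 0" by (simp add: poly_monom)
  then have "r0 \<noteq> 0" using u0 a0 by (auto simp: power_0_left)
  define R where "R = fps_radical (\<lambda>_ _. r0) a u"
  have "R ^ a = u"
    using power_radical[of u "\<lambda>_ _. r0" "a - 1"] u0 r0 a0 by (simp add: R_def)
  then have "(fps_X * R) ^ a = G" by (simp add: power_mult_distrib Gu mult.commute)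
  moreover have "(fps_X * R) $ 0 = 0" "(fps_X * R) $ 1 \<noteq> 0" using \<open>r0 \<noteq> 0\<close> a0 by (simp_all add: R_def)
  ultimately show ?thesis unfolding a_def by blast
qed

text \<open>Writing G1 = S ^ a with S of order one, the substitution t := S transports the claim to
  G1 = t ^ a, where every series is a combination of 1, t, ..., t ^ (a - 1) with coefficients in
  k[[t ^ a]].\<close>
lemma fps_algebraic_over_compose:
  fixes G1 G2 :: "'k::field_char_0 fps"
  assumes k: "alg_closed_type TYPE('k)" and G1: "G1 $ 0 = 0" "G1 \<noteq> 0"
  shows "\<exists>c. (\<exists>j\<le>subdegree G1. c j \<noteq> 0) \<and> (\<Sum>j\<le>subdegree G1. (c j oo G1) * G2 ^ j) = 0"
proof -
  define a where "a = subdegree G1"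
  have a0: "0 < a" using G1 subdegree_eq_0_iff[of G1] by (simp add: a_def)
  obtain S where S: "S $ 0 = 0" "S $ 1 \<noteq> 0" "S ^ a = G1"
    using fps_root_of_order_one[OF k G1] a_def by blast
  define T where "T = fps_inv S"
  have T0: "T $ 0 = 0" by (simp add: T_def fps_inv_def)
  have TS: "T oo S = fps_X" unfolding T_def by (rule fps_inv[OF S(1,2)])
  define \<sigma> where "\<sigma> c = c oo (fps_X ^ a :: 'k fps)" for c
  have Xa0: "(fps_X ^ a :: 'k fps) $ 0 = 0" using a0 by simp
  have "\<exists>c. (\<exists>i\<le>a. c i \<noteq> 0) \<and> (\<Sum>i\<le>a. \<sigma> (c i) * (G2 oo T) ^ i) = 0"
    by (rule nontrivial_relation_if_fewer_generators[where A = "\<lambda>i r. fps_section a ((G2 oo T) ^ i) r"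
          and g = "\<lambda>r. fps_X ^ r"])
      (simp_all add: \<sigma>_def fps_compose_add_distrib fps_compose_mult_distrib[OF Xa0]
        flip: fps_sum_sections[OF a0])
  then obtain c where c: "\<exists>i\<le>a. c i \<noteq> 0" "(\<Sum>i\<le>a. \<sigma> (c i) * (G2 oo T) ^ i) = 0" by blast
  have "\<sigma> (c i) oo S = c i oo G1" for i
    unfolding \<sigma>_def using fps_compose_assoc[OF S(1) Xa0, of "c i"] fps_compose_power[OF S(1), of fps_X a]
    by (simp add: S)
  moreover have "(G2 oo T) oo S = G2"
    using fps_compose_assoc[OF S(1) T0, of G2] TS by simp
  ultimately have "(\<Sum>i\<le>a. \<sigma> (c i) * (G2 oo T) ^ i) oo S = (\<Sum>i\<le>a. (c i oo G1) * G2 ^ i)"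
    by (simp add: fps_compose_sum_distrib fps_compose_mult_distrib[OF S(1)] flip: fps_compose_power[OF S(1)])
  then show ?thesis using c by (auto simp: a_def)
qed

section \<open>Valued fields\<close>

locale valued_field =
  fixes w :: "'L::field \<Rightarrow> int"
  assumes valuation: "is_valuation w"
begin

lemma w_mult: "x \<noteq> 0 \<Longrightarrow> y \<noteq> 0 \<Longrightarrow> w (x * y) = w x + w y"
  using valuation unfolding is_valuation_def by blast

lemma w_add_ge_min: "x \<noteq> 0 \<Longrightarrow> y \<noteq> 0 \<Longrightarrow> x + y \<noteq> 0 \<Longrightarrow> min (w x) (w y) \<le> w (x + y)"
  using valuation unfolding is_valuation_def by blast

lemma w_one [simp]: "w 1 = 0"
  using w_mult[of 1 1] by simp

lemma w_inverse: "x \<noteq> 0 \<Longrightarrow> w (inverse x) = - w x"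
  using w_mult[of x "inverse x"] by simp

lemma w_divide: "x \<noteq> 0 \<Longrightarrow> y \<noteq> 0 \<Longrightarrow> w (x / y) = w x - w y"
  by (simp add: divide_inverse w_mult w_inverse)

lemma w_minus [simp]: "w (- x) = w x"
proof (cases "x = 0")
  case False
  have "w (-x) + w (-x) = w x + w x"
    using False w_mult[of "-x" "-x"] w_mult[of x x] by simp
  then show ?thesis by simp
qed simp

lemma w_power: "x \<noteq> 0 \<Longrightarrow> w (x ^ n) = int n * w x"
  by (induction n) (simp_all add: w_mult algebra_simps)

lemma w_diff_ge_min: "x \<noteq> 0 \<Longrightarrow> y \<noteq> 0 \<Longrightarrow> x - y \<noteq> 0 \<Longrightarrow> min (w x) (w y) \<le> w (x - y)"
  using w_add_ge_min[of x "- y"] by simp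

lemma vge_zero [simp]: "vge w 0 N"
  by (simp add: vge_def)

lemma vge_minus [simp]: "vge w (- x) N \<longleftrightarrow> vge w x N"
  by (simp add: vge_def)

lemma vge_mono: "vge w x N \<Longrightarrow> M \<le> N \<Longrightarrow> vge w x M"
  by (auto simp: vge_def)

lemma vge_add: "vge w x N \<Longrightarrow> vge w y N \<Longrightarrow> vge w (x + y) N"
  unfolding vge_def using w_add_ge_min[of x y] by (cases "x = 0"; cases "y = 0"; cases "x + y = 0"; auto)

lemma vge_diff: "vge w x N \<Longrightarrow> vge w y N \<Longrightarrow> vge w (x - y) N"
  using vge_add[of x N "- y"] by simp

lemma vge_mult: "vge w x a \<Longrightarrow> vge w y b \<Longrightarrow> vge w (x * y) (a + b)"
  by (cases "x = 0"; cases "y = 0") (auto simp: vge_def w_mult)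

lemma vge_power: "vge w x a \<Longrightarrow> vge w (x ^ n) (int n * a)"
proof (induction n)
  case (Suc n)
  then have "vge w (x * x ^ n) (a + int n * a)" using vge_mult by blast
  then show ?case by (simp add: algebra_simps)
qed (simp add: vge_def)

lemma vge_sum: "finite A \<Longrightarrow> (\<And>i. i \<in> A \<Longrightarrow> vge w (f i) N) \<Longrightarrow> vge w (sum f A) N"
  by (induction A rule: finite_induct) (auto intro: vge_add)

lemma eq_if_vge_diff: "(\<And>N. vge w (x - y) N) \<Longrightarrow> x = y"
  by (metis add_le_same_cancel1 not_one_le_zero right_minus_eq vge_def)

lemma w_add_dominated:
  assumes "x \<noteq> 0" "vge w y (w x + 1)"
  shows "x + y \<noteq> 0 \<and> w (x + y) = w x"
proof (cases "y = 0")
  case False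
  then have wy: "w x < w y" using assms by (auto simp: vge_def)
  have nz: "x + y \<noteq> 0"
  proof
    assume "x + y = 0"
    then have "y = - x" by (simp add: add_eq_0_iff2)
    then show False using wy by simp
  qed
  have "min (w x) (w y) \<le> w (x + y)" using w_add_ge_min[OF assms(1) False nz] .
  moreover have "min (w (x + y)) (w y) \<le> w x"
    using w_diff_ge_min[OF nz False] assms(1) by simp
  ultimately show ?thesis using wy nz by auto
qed (use assms in simp)

end

section \<open>Substituting elements of positive value into power series\<close>

locale complete_valued_field = valued_field w
  for w :: "'L::field \<Rightarrow> int" +
  fixes \<kappa> :: "'k::field \<Rightarrow> 'L"
  assumes complete: "v_cauchy w s \<Longrightarrow> \<exists>l. v_conv w s l"
    and \<kappa>_add: "\<kappa> (a + b) = \<kappa> a + \<kappa> b"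
    and \<kappa>_mult: "\<kappa> (a * b) = \<kappa> a * \<kappa> b"
    and \<kappa>_one [simp]: "\<kappa> 1 = 1"
    and w_\<kappa>: "c \<noteq> 0 \<Longrightarrow> w (\<kappa> c) = 0"
begin

lemma \<kappa>_zero [simp]: "\<kappa> 0 = 0"
  using \<kappa>_add[of 0 0] by (metis add.right_neutral add_left_cancel)

lemma \<kappa>_minus: "\<kappa> (- a) = - \<kappa> a"
  using \<kappa>_add[of a "- a"] by (simp add: eq_neg_iff_add_eq_0 add.commute)

lemma \<kappa>_sum: "\<kappa> (sum f A) = (\<Sum>x\<in>A. \<kappa> (f x))"
  by (induction A rule: infinite_finite_induct) (simp_all add: \<kappa>_add)

lemma \<kappa>_nonzero: "c \<noteq> 0 \<Longrightarrow> \<kappa> c \<noteq> 0"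
  using \<kappa>_mult[of c "inverse c"] by auto

lemma vge_\<kappa>: "vge w (\<kappa> c) 0"
  by (cases "c = 0") (simp_all add: vge_def w_\<kappa>)

lemma w_diff_\<kappa>_mult_ge_min:
  "a \<noteq> 0 \<Longrightarrow> b \<noteq> 0 \<Longrightarrow> c \<noteq> 0 \<Longrightarrow> b - \<kappa> c * a \<noteq> 0 \<Longrightarrow> min (w b) (w a) \<le> w (b - \<kappa> c * a)"
  using w_diff_ge_min[of b "\<kappa> c * a"] by (simp add: w_mult \<kappa>_nonzero w_\<kappa>)

definition exps_upto :: "nat \<Rightarrow> (nat \<times> nat) set" where
  "exps_upto n = {p. fst p + snd p \<le> n}"

lemma finite_exps_upto [simp]: "finite (exps_upto n)"
proof (rule finite_subset)
  show "exps_upto n \<subseteq> {..n} \<times> {..n}" by (auto simp: exps_upto_def)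
qed simp

definition ps_term :: "'L \<Rightarrow> 'L \<Rightarrow> 'k fps fps \<Rightarrow> nat \<times> nat \<Rightarrow> 'L" where
  "ps_term Y1 Y2 f p = \<kappa> (f $ snd p $ fst p) * Y1 ^ fst p * Y2 ^ snd p"

definition partial_sum :: "'L \<Rightarrow> 'L \<Rightarrow> 'k fps fps \<Rightarrow> nat \<Rightarrow> 'L" where
  "partial_sum Y1 Y2 f n = (\<Sum>p\<in>exps_upto n. ps_term Y1 Y2 f p)"

definition vals_ge :: "'L \<Rightarrow> 'L \<Rightarrow> int \<Rightarrow> bool" where
  "vals_ge Y1 Y2 m \<longleftrightarrow> 1 \<le> m \<and> vge w Y1 m \<and> vge w Y2 m"

text \<open>The limit of the partial sums; it is only meaningful when vals_ge Y1 Y2 m holds for some m,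
  otherwise SOME picks an arbitrary element.\<close>
definition ps_subst :: "'L \<Rightarrow> 'L \<Rightarrow> 'k fps fps \<Rightarrow> 'L" where
  "ps_subst Y1 Y2 f = (SOME l. v_conv w (partial_sum Y1 Y2 f) l)"

lemma vals_ge_ge_1: "vals_ge Y1 Y2 m \<Longrightarrow> 1 \<le> m"
  by (simp add: vals_ge_def)

lemma le_mult_if_vals_ge: "vals_ge Y1 Y2 m \<Longrightarrow> int n \<le> m * int n"
  by (simp add: vals_ge_def mult_le_cancel_right1)

lemma ps_term_vge:
  assumes "vals_ge Y1 Y2 m"
  shows "vge w (ps_term Y1 Y2 f p) (m * int (fst p + snd p))"
proof -
  have "vge w (\<kappa> (f $ snd p $ fst p) * Y1 ^ fst p * Y2 ^ snd p) (0 + int (fst p) * m + int (snd p) * m)"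
    using assms unfolding vals_ge_def by (intro vge_mult vge_power vge_\<kappa>) auto
  then show ?thesis unfolding ps_term_def by (simp add: algebra_simps)
qed

lemma ps_term_vge_if_deg_ge:
  "vals_ge Y1 Y2 m \<Longrightarrow> n \<le> fst p + snd p \<Longrightarrow> vge w (ps_term Y1 Y2 f p) (m * int n)"
  by (rule vge_mono[OF ps_term_vge]) (auto simp: vals_ge_def)

lemma partial_sum_vge_0: "vals_ge Y1 Y2 m \<Longrightarrow> vge w (partial_sum Y1 Y2 f n) 0"
  unfolding partial_sum_def by (rule vge_sum) (use ps_term_vge_if_deg_ge[of Y1 Y2 m 0] in auto)

lemma partial_sum_diff_vge:
  assumes "vals_ge Y1 Y2 m" "n \<le> n'"
  shows "vge w (partial_sum Y1 Y2 f n' - partial_sum Y1 Y2 f n) (m * int (n + 1))"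
proof -
  have sub: "exps_upto n \<subseteq> exps_upto n'" using assms(2) by (auto simp: exps_upto_def)
  have "partial_sum Y1 Y2 f n' - partial_sum Y1 Y2 f n = (\<Sum>p\<in>exps_upto n' - exps_upto n. ps_term Y1 Y2 f p)"
    unfolding partial_sum_def by (simp add: sum_diff[OF finite_exps_upto sub])
  also have "vge w \<dots> (m * int (n + 1))"
  proof (rule vge_sum)
    fix p assume "p \<in> exps_upto n' - exps_upto n"
    then show "vge w (ps_term Y1 Y2 f p) (m * int (n + 1))"
      by (intro ps_term_vge_if_deg_ge[OF assms(1)]) (auto simp: exps_upto_def)
  qed simp
  finally show ?thesis .
qed

lemma partial_sum_cauchy:
  assumes "vals_ge Y1 Y2 m"
  shows "v_cauchy w (partial_sum Y1 Y2 f)"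
proof -
  have near: "vge w (partial_sum Y1 Y2 f b - partial_sum Y1 Y2 f a) N"
    if "a \<le> b" "nat N \<le> a" for a b N
  proof (rule vge_mono[OF partial_sum_diff_vge[OF assms that(1)]])
    have "N \<le> int (a + 1)" using that(2) by linarith
    also have "\<dots> \<le> m * int (a + 1)" using le_mult_if_vals_ge[OF assms] .
    finally show "N \<le> m * int (a + 1)" .
  qed
  show ?thesis
    unfolding v_cauchy_def by (metis near minus_diff_eq vge_minus nat_le_linear)
qed

lemma ps_subst_limit: "vals_ge Y1 Y2 m \<Longrightarrow> v_conv w (partial_sum Y1 Y2 f) (ps_subst Y1 Y2 f)"
  unfolding ps_subst_def using complete[OF partial_sum_cauchy] by (rule someI_ex)

lemma ps_subst_approx:
  assumes "vals_ge Y1 Y2 m"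
  shows "vge w (ps_subst Y1 Y2 f - partial_sum Y1 Y2 f n) (m * int (n + 1))"
proof -
  obtain M where M: "\<forall>k\<ge>M. vge w (partial_sum Y1 Y2 f k - ps_subst Y1 Y2 f) (m * int (n + 1))"
    using ps_subst_limit[OF assms, of f] unfolding v_conv_def by blast
  define k where "k = max M n"
  have "vge w (partial_sum Y1 Y2 f k - partial_sum Y1 Y2 f n) (m * int (n + 1))"
    using partial_sum_diff_vge[OF assms, of n k] by (simp add: k_def)
  from vge_diff[OF this, of "partial_sum Y1 Y2 f k - ps_subst Y1 Y2 f"] show ?thesis
    using M by (simp add: k_def)
qed

lemma ps_subst_approx_weak:
  "vals_ge Y1 Y2 m \<Longrightarrow> vge w (ps_subst Y1 Y2 f - partial_sum Y1 Y2 f n) (int (n + 1))"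
  using ps_subst_approx le_mult_if_vals_ge vge_mono by blast

lemma ps_subst_eqI:
  assumes "vals_ge Y1 Y2 m" "\<And>n. vge w (z - partial_sum Y1 Y2 f n) (int (n + 1))"
  shows "z = ps_subst Y1 Y2 f"
proof (rule eq_if_vge_diff)
  fix N :: int
  have "vge w ((z - partial_sum Y1 Y2 f (nat N)) - (ps_subst Y1 Y2 f - partial_sum Y1 Y2 f (nat N)))
      (int (nat N + 1))"
    by (intro vge_diff assms(2) ps_subst_approx_weak[OF assms(1)])
  then show "vge w (z - ps_subst Y1 Y2 f) N" by (simp add: vge_mono)
qed

lemma ps_subst_vge_0:
  assumes "vals_ge Y1 Y2 m"
  shows "vge w (ps_subst Y1 Y2 f) 0"
proof -
  have "vge w ((ps_subst Y1 Y2 f - partial_sum Y1 Y2 f 0) + partial_sum Y1 Y2 f 0) 0"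
    using ps_subst_approx_weak[OF assms, of f 0] partial_sum_vge_0[OF assms]
    by (intro vge_add) (auto elim: vge_mono)
  then show ?thesis by simp
qed

lemma partial_sum_add: "partial_sum Y1 Y2 (f + g) n = partial_sum Y1 Y2 f n + partial_sum Y1 Y2 g n"
  unfolding partial_sum_def ps_term_def by (simp add: \<kappa>_add algebra_simps sum.distrib)

lemma ps_subst_add:
  assumes "vals_ge Y1 Y2 m"
  shows "ps_subst Y1 Y2 (f + g) = ps_subst Y1 Y2 f + ps_subst Y1 Y2 g"
proof (rule sym, rule ps_subst_eqI[OF assms])
  fix n
  have "vge w ((ps_subst Y1 Y2 f - partial_sum Y1 Y2 f n) + (ps_subst Y1 Y2 g - partial_sum Y1 Y2 g n))
      (int (n + 1))"
    by (intro vge_add ps_subst_approx_weak[OF assms])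
  then show "vge w (ps_subst Y1 Y2 f + ps_subst Y1 Y2 g - partial_sum Y1 Y2 (f + g) n) (int (n + 1))"
    by (simp add: partial_sum_add algebra_simps)
qed

lemma ps_subst_zero: "vals_ge Y1 Y2 m \<Longrightarrow> ps_subst Y1 Y2 0 = 0"
  using ps_subst_add[of Y1 Y2 m 0 0] by (metis add.right_neutral add_left_cancel)

lemma ps_subst_minus: "vals_ge Y1 Y2 m \<Longrightarrow> ps_subst Y1 Y2 (- f) = - ps_subst Y1 Y2 f"
  using ps_subst_add[of Y1 Y2 m f "- f"] ps_subst_zero[of Y1 Y2 m]
  by (simp add: eq_neg_iff_add_eq_0 add.commute)

lemma ps_subst_diff: "vals_ge Y1 Y2 m \<Longrightarrow> ps_subst Y1 Y2 (f - g) = ps_subst Y1 Y2 f - ps_subst Y1 Y2 g"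
  using ps_subst_add[of Y1 Y2 m f "- g"] ps_subst_minus[of Y1 Y2 m g] by simp

lemma ps_term_mult:
  "ps_term Y1 Y2 (f * g) s =
     (\<Sum>p\<in>{..fst s} \<times> {..snd s}. ps_term Y1 Y2 f p * ps_term Y1 Y2 g (fst s - fst p, snd s - snd p))"
proof -
  have split_power: "Y1 ^ fst s * Y2 ^ snd s =
      (Y1 ^ fst p * Y2 ^ snd p) * (Y1 ^ (fst s - fst p) * Y2 ^ (snd s - snd p))"
    if "p \<in> {..fst s} \<times> {..snd s}" for p
    using that by (auto simp: algebra_simps simp flip: power_add)
  have "(f * g) $ snd s $ fst s =
      (\<Sum>j\<le>snd s. \<Sum>i\<le>fst s. f $ j $ i * g $ (snd s - j) $ (fst s - i))"
    by (simp add: fps_mult_nth fps_sum_nth atLeast0AtMost)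
  also have "\<dots> = (\<Sum>p\<in>{..fst s} \<times> {..snd s}. f $ snd p $ fst p * g $ (snd s - snd p) $ (fst s - fst p))"
    by (subst sum.swap) (simp add: sum.cartesian_product split_def)
  finally have "ps_term Y1 Y2 (f * g) s = (\<Sum>p\<in>{..fst s} \<times> {..snd s}.
      \<kappa> (f $ snd p $ fst p) * \<kappa> (g $ (snd s - snd p) $ (fst s - fst p)) * (Y1 ^ fst s * Y2 ^ snd s))"
    by (simp add: ps_term_def \<kappa>_sum \<kappa>_mult sum_distrib_right mult.assoc)
  also have "\<dots> = (\<Sum>p\<in>{..fst s} \<times> {..snd s}.
      ps_term Y1 Y2 f p * ps_term Y1 Y2 g (fst s - fst p, snd s - snd p))"
    by (rule sum.cong[OF refl]) (simp add: split_power ps_term_def mult_ac)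
  finally show ?thesis .
qed

lemma partial_sum_mult:
  "partial_sum Y1 Y2 (f * g) n =
     (\<Sum>(p, q)\<in>{(p, q). fst p + snd p + fst q + snd q \<le> n}. ps_term Y1 Y2 f p * ps_term Y1 Y2 g q)"
proof -
  have "partial_sum Y1 Y2 (f * g) n =
      (\<Sum>(s, p)\<in>Sigma (exps_upto n) (\<lambda>s. {..fst s} \<times> {..snd s}).
         ps_term Y1 Y2 f p * ps_term Y1 Y2 g (fst s - fst p, snd s - snd p))"
    unfolding partial_sum_def ps_term_mult by (subst sum.Sigma) auto
  also have "\<dots> = (\<Sum>(p, q)\<in>{(p, q). fst p + snd p + fst q + snd q \<le> n}. ps_term Y1 Y2 f p * ps_term Y1 Y2 g q)"
    by (rule sum.reindex_bij_witness[where i = "\<lambda>(p, q). ((fst p + fst q, snd p + snd q), p)"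
          and j = "\<lambda>(s, p). (p, (fst s - fst p, snd s - snd p))"])
      (auto simp: exps_upto_def)
  finally show ?thesis .
qed

lemma partial_sum_mult_diff_vge:
  assumes "vals_ge Y1 Y2 m"
  shows "vge w (partial_sum Y1 Y2 f n * partial_sum Y1 Y2 g n - partial_sum Y1 Y2 (f * g) n)
    (m * int (n + 1))"
proof -
  define low where "low = {(p, q). fst p + snd p + fst q + snd q \<le> n}"
  have sub: "low \<subseteq> exps_upto n \<times> exps_upto n" by (auto simp: low_def exps_upto_def)
  have "partial_sum Y1 Y2 f n * partial_sum Y1 Y2 g n - partial_sum Y1 Y2 (f * g) n =
      (\<Sum>(p, q)\<in>exps_upto n \<times> exps_upto n - low. ps_term Y1 Y2 f p * ps_term Y1 Y2 g q)"
    unfolding partial_sum_mult low_def[symmetric]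
    by (simp add: partial_sum_def sum_product sum.cartesian_product sum_diff[OF _ sub])
  also have "vge w \<dots> (m * int (n + 1))"
  proof (rule vge_sum)
    fix pq assume "pq \<in> exps_upto n \<times> exps_upto n - low"
    then obtain p q where pq: "pq = (p, q)" and high: "n + 1 \<le> (fst p + snd p) + (fst q + snd q)"
      by (auto simp: low_def)
    have "vge w (ps_term Y1 Y2 f p * ps_term Y1 Y2 g q)
        (m * int (fst p + snd p) + m * int (fst q + snd q))"
      by (intro vge_mult ps_term_vge assms)
    moreover have "m * int (n + 1) \<le> m * int (fst p + snd p) + m * int (fst q + snd q)"
      using vals_ge_ge_1[OF assms] high
      by (simp flip: distrib_left of_nat_add)
    ultimately show "vge w (case pq of (p, q) \<Rightarrow> ps_term Y1 Y2 f p * ps_term Y1 Y2 g q) (m * int (n + 1))"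
      unfolding pq by (simp add: vge_mono)
  qed simp
  finally show ?thesis .
qed

lemma ps_subst_mult:
  assumes "vals_ge Y1 Y2 m"
  shows "ps_subst Y1 Y2 (f * g) = ps_subst Y1 Y2 f * ps_subst Y1 Y2 g"
proof (rule sym, rule ps_subst_eqI[OF assms])
  fix n
  let ?F = "ps_subst Y1 Y2 f" and ?G = "ps_subst Y1 Y2 g"
    and ?f = "partial_sum Y1 Y2 f n" and ?g = "partial_sum Y1 Y2 g n"
  have "?F * ?G - partial_sum Y1 Y2 (f * g) n =
      (?F - ?f) * ?G + ?f * (?G - ?g) + (?f * ?g - partial_sum Y1 Y2 (f * g) n)"
    by (simp add: algebra_simps)
  also have "vge w \<dots> (m * int (n + 1))"
    using vge_mult[OF ps_subst_approx[OF assms] ps_subst_vge_0[OF assms], of f n g]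
      vge_mult[OF partial_sum_vge_0[OF assms] ps_subst_approx[OF assms], of f n g n]
    by (intro vge_add partial_sum_mult_diff_vge[OF assms]) simp_all
  finally show "vge w (?F * ?G - partial_sum Y1 Y2 (f * g) n) (int (n + 1))"
    by (rule vge_mono) (rule le_mult_if_vals_ge[OF assms])
qed

lemma ps_term_eq_0: "f $ snd p $ fst p = 0 \<Longrightarrow> ps_term Y1 Y2 f p = 0"
  by (simp add: ps_term_def)

lemma partial_sum_eq_ps_term:
  assumes "q \<in> exps_upto n" "\<And>p. p \<in> exps_upto n \<Longrightarrow> p \<noteq> q \<Longrightarrow> f $ snd p $ fst p = 0"
  shows "partial_sum Y1 Y2 f n = ps_term Y1 Y2 f q"
proof -
  have "\<forall>p\<in>exps_upto n - {q}. ps_term Y1 Y2 f p = 0"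
    using assms(2) by (blast intro: ps_term_eq_0)
  then show ?thesis
    unfolding partial_sum_def by (simp add: sum.remove[OF finite_exps_upto assms(1)] sum.neutral)
qed

lemma partial_sum_eq_0:
  "(\<And>p. p \<in> exps_upto n \<Longrightarrow> f $ snd p $ fst p = 0) \<Longrightarrow> partial_sum Y1 Y2 f n = 0"
  unfolding partial_sum_def by (auto intro!: sum.neutral ps_term_eq_0)

lemma partial_sum_eq_double_sum:
  "partial_sum Y1 Y2 f n = (\<Sum>i\<le>n. \<Sum>j\<le>n - i. ps_term Y1 Y2 f (i, j))"
proof -
  have "exps_upto n = Sigma {..n} (\<lambda>i. {..n - i})" by (auto simp: exps_upto_def)
  then show ?thesis by (simp add: partial_sum_def sum.Sigma)
qed

lemma partial_sum_const: "partial_sum Y1 Y2 (fps_const G) n = (\<Sum>i\<le>n. \<kappa> (G $ i) * Y1 ^ i)"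
proof -
  have "ps_term Y1 Y2 (fps_const G) (i, j) = (if j = 0 then \<kappa> (G $ i) * Y1 ^ i else 0)" for i j
    by (simp add: ps_term_def)
  then show ?thesis by (simp add: partial_sum_eq_double_sum sum.delta)
qed

lemma ps_subst_const:
  assumes "vals_ge Y1 Y2 m"
  shows "ps_subst Y1 Y2 (fps_const (fps_const c)) = \<kappa> c"
proof (rule sym, rule ps_subst_eqI[OF assms])
  fix n
  have "partial_sum Y1 Y2 (fps_const (fps_const c)) n = ps_term Y1 Y2 (fps_const (fps_const c)) (0, 0)"
    by (rule partial_sum_eq_ps_term) (auto simp: exps_upto_def)
  then show "vge w (\<kappa> c - partial_sum Y1 Y2 (fps_const (fps_const c)) n) (int (n + 1))"
    by (simp add: ps_term_def)
qed

lemma ps_subst_one: "vals_ge Y1 Y2 m \<Longrightarrow> ps_subst Y1 Y2 1 = 1"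
  using ps_subst_const[of Y1 Y2 m 1] by simp

lemma ps_subst_X1:
  assumes "vals_ge Y1 Y2 m"
  shows "ps_subst Y1 Y2 (fps_const fps_X) = Y1"
proof (rule sym, rule ps_subst_eqI[OF assms])
  fix n
  show "vge w (Y1 - partial_sum Y1 Y2 (fps_const fps_X) n) (int (n + 1))"
  proof (cases n)
    case 0
    have "partial_sum Y1 Y2 (fps_const fps_X) n = 0"
      by (rule partial_sum_eq_0) (auto simp: exps_upto_def 0)
    then show ?thesis using assms 0 by (auto simp: vals_ge_def intro: vge_mono)
  next
    case (Suc k)
    have "partial_sum Y1 Y2 (fps_const fps_X) n = ps_term Y1 Y2 (fps_const fps_X) (1, 0)"
      by (rule partial_sum_eq_ps_term) (auto simp: exps_upto_def Suc)
    then show ?thesis by (simp add: ps_term_def)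
  qed
qed

lemma ps_subst_X2:
  assumes "vals_ge Y1 Y2 m"
  shows "ps_subst Y1 Y2 fps_X = Y2"
proof (rule sym, rule ps_subst_eqI[OF assms])
  fix n
  show "vge w (Y2 - partial_sum Y1 Y2 fps_X n) (int (n + 1))"
  proof (cases n)
    case 0
    have "partial_sum Y1 Y2 fps_X n = 0"
      by (rule partial_sum_eq_0) (auto simp: exps_upto_def 0)
    then show ?thesis using assms 0 by (auto simp: vals_ge_def intro: vge_mono)
  next
    case (Suc k)
    have "partial_sum Y1 Y2 fps_X n = ps_term Y1 Y2 fps_X (0, 1)"
      by (rule partial_sum_eq_ps_term) (auto simp: exps_upto_def Suc)
    then show ?thesis by (simp add: ps_term_def)
  qed
qed

lemma ps_subst_power: "vals_ge Y1 Y2 m \<Longrightarrow> ps_subst Y1 Y2 (f ^ n) = ps_subst Y1 Y2 f ^ n"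
  by (induction n) (simp_all add: ps_subst_one ps_subst_mult)

lemma ps_subst_vge_if_low_coeffs_zero:
  assumes "vals_ge Y1 Y2 m" and low: "\<And>i j. i + j < N \<Longrightarrow> f $ j $ i = 0"
  shows "vge w (ps_subst Y1 Y2 f) (m * int N)"
proof (cases N)
  case 0
  then show ?thesis using ps_subst_vge_0[OF assms(1)] by simp
next
  case (Suc k)
  have "partial_sum Y1 Y2 f k = 0" by (rule partial_sum_eq_0) (auto simp: exps_upto_def Suc intro!: low)
  then show ?thesis using ps_subst_approx[OF assms(1), of f k] Suc by simp
qed

definition ps_subst1 :: "'L \<Rightarrow> 'k fps \<Rightarrow> 'L" where
  "ps_subst1 t G = ps_subst t 0 (fps_const G)"

lemma ps_subst1_add: "vals_ge t 0 m \<Longrightarrow> ps_subst1 t (F + G) = ps_subst1 t F + ps_subst1 t G"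
  by (simp add: ps_subst1_def ps_subst_add flip: fps_const_add)

lemma ps_subst1_diff: "vals_ge t 0 m \<Longrightarrow> ps_subst1 t (F - G) = ps_subst1 t F - ps_subst1 t G"
  by (simp add: ps_subst1_def ps_subst_diff flip: fps_const_sub)

lemma ps_subst1_mult: "vals_ge t 0 m \<Longrightarrow> ps_subst1 t (F * G) = ps_subst1 t F * ps_subst1 t G"
  by (simp add: ps_subst1_def ps_subst_mult flip: fps_const_mult)

lemma ps_subst1_power: "vals_ge t 0 m \<Longrightarrow> ps_subst1 t (G ^ n) = ps_subst1 t G ^ n"
  by (simp add: ps_subst1_def ps_subst_power flip: fps_const_power)

lemma ps_subst1_zero: "vals_ge t 0 m \<Longrightarrow> ps_subst1 t 0 = 0"
  by (simp add: ps_subst1_def ps_subst_zero)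

lemma ps_subst1_const: "vals_ge t 0 m \<Longrightarrow> ps_subst1 t (fps_const c) = \<kappa> c"
  by (simp add: ps_subst1_def ps_subst_const)

lemma ps_subst1_X: "vals_ge t 0 m \<Longrightarrow> ps_subst1 t fps_X = t"
  by (simp add: ps_subst1_def ps_subst_X1)

lemma ps_subst1_sum: "vals_ge t 0 m \<Longrightarrow> ps_subst1 t (sum F A) = (\<Sum>i\<in>A. ps_subst1 t (F i))"
  by (induction A rule: infinite_finite_induct) (simp_all add: ps_subst1_zero ps_subst1_add)

lemma ps_subst1_vge_if_low_coeffs_zero:
  "vals_ge t 0 m \<Longrightarrow> (\<And>i. i < N \<Longrightarrow> G $ i = 0) \<Longrightarrow> vge w (ps_subst1 t G) (m * int N)"
  unfolding ps_subst1_def by (rule ps_subst_vge_if_low_coeffs_zero) auto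

lemma w_ps_subst1_unit:
  assumes t: "vals_ge t 0 m" and G0: "G $ 0 \<noteq> 0"
  shows "ps_subst1 t G \<noteq> 0 \<and> w (ps_subst1 t G) = 0"
proof -
  have "vge w (ps_subst1 t (G - fps_const (G $ 0))) (m * int 1)"
    by (rule ps_subst1_vge_if_low_coeffs_zero[OF t]) simp
  then have "vge w (ps_subst1 t (G - fps_const (G $ 0))) (w (\<kappa> (G $ 0)) + 1)"
    using t G0 by (auto simp: w_\<kappa> vals_ge_def elim: vge_mono)
  from w_add_dominated[OF \<kappa>_nonzero[OF G0] this] show ?thesis
    using G0 by (simp add: ps_subst1_diff[OF t] ps_subst1_const[OF t] w_\<kappa>)
qed

inductive_set alg_gen :: "'L \<Rightarrow> 'L \<Rightarrow> 'L set" for a b where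
  alg_gen_const: "\<kappa> c \<in> alg_gen a b"
| alg_gen_fst: "a \<in> alg_gen a b"
| alg_gen_snd: "b \<in> alg_gen a b"
| alg_gen_add: "x \<in> alg_gen a b \<Longrightarrow> y \<in> alg_gen a b \<Longrightarrow> x + y \<in> alg_gen a b"
| alg_gen_mult: "x \<in> alg_gen a b \<Longrightarrow> y \<in> alg_gen a b \<Longrightarrow> x * y \<in> alg_gen a b"

lemma alg_gen_subset:
  assumes "\<And>c. \<kappa> c \<in> S" "a \<in> S" "b \<in> S"
    "\<And>x y. x \<in> S \<Longrightarrow> y \<in> S \<Longrightarrow> x + y \<in> S" "\<And>x y. x \<in> S \<Longrightarrow> y \<in> S \<Longrightarrow> x * y \<in> S"
  shows "alg_gen a b \<subseteq> S"
proof
  fix x assume "x \<in> alg_gen a b"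
  then show "x \<in> S" by (induction rule: alg_gen.induct) (use assms in auto)
qed

lemma alg_gen_mono:
  "a \<in> alg_gen a' b' \<Longrightarrow> b \<in> alg_gen a' b' \<Longrightarrow> alg_gen a b \<subseteq> alg_gen a' b'"
  by (rule alg_gen_subset) (auto intro: alg_gen.intros)

lemma alg_gen_commute: "alg_gen a b = alg_gen b a"
  by (intro equalityI alg_gen_mono) (auto intro: alg_gen.intros)

lemma alg_gen_power: "x \<in> alg_gen a b \<Longrightarrow> x ^ n \<in> alg_gen a b"
  by (induction n) (use alg_gen_const[of 1] in \<open>auto intro: alg_gen_mult\<close>)

lemma alg_gen_sum: "finite A \<Longrightarrow> (\<And>i. i \<in> A \<Longrightarrow> f i \<in> alg_gen a b) \<Longrightarrow> sum f A \<in> alg_gen a b"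
  by (induction A rule: finite_induct) (use alg_gen_const[of 0] in \<open>auto intro: alg_gen_add\<close>)

lemma alg_gen_subset_range_ps_subst:
  assumes "vals_ge Y1 Y2 m"
  shows "alg_gen Y1 Y2 \<subseteq> range (ps_subst Y1 Y2)"
proof (rule alg_gen_subset)
  show "\<kappa> c \<in> range (ps_subst Y1 Y2)" for c
    using ps_subst_const[OF assms] by (metis rangeI)
  show "Y1 \<in> range (ps_subst Y1 Y2)" using ps_subst_X1[OF assms] by (metis rangeI)
  show "Y2 \<in> range (ps_subst Y1 Y2)" using ps_subst_X2[OF assms] by (metis rangeI)
  show "x + y \<in> range (ps_subst Y1 Y2)" "x * y \<in> range (ps_subst Y1 Y2)"
    if "x \<in> range (ps_subst Y1 Y2)" "y \<in> range (ps_subst Y1 Y2)" for x y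
    using that by (auto simp flip: ps_subst_add[OF assms] ps_subst_mult[OF assms])
qed

lemma alg_gen_subset_range_ps_subst1:
  assumes t: "vals_ge t 0 m" and b: "b \<in> range (ps_subst1 t)"
  shows "alg_gen t b \<subseteq> range (ps_subst1 t)"
proof (rule alg_gen_subset)
  show "\<kappa> c \<in> range (ps_subst1 t)" for c
    using ps_subst1_const[OF t] by (metis rangeI)
  show "t \<in> range (ps_subst1 t)" using ps_subst1_X[OF t] by (metis rangeI)
  show "x + y \<in> range (ps_subst1 t)" "x * y \<in> range (ps_subst1 t)"
    if "x \<in> range (ps_subst1 t)" "y \<in> range (ps_subst1 t)" for x y
    using that by (auto simp flip: ps_subst1_add[OF t] ps_subst1_mult[OF t])
qed (fact b)

definition poly_emb :: "'k poly \<Rightarrow> 'L \<Rightarrow> 'L" where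
  "poly_emb p u = (\<Sum>i\<le>degree p. \<kappa> (coeff p i) * u ^ i)"

lemma poly_emb_eq_sum_lessThan:
  assumes "degree p < N"
  shows "poly_emb p u = (\<Sum>i<N. \<kappa> (coeff p i) * u ^ i)"
proof -
  have "(\<Sum>i<N. \<kappa> (coeff p i) * u ^ i) = (\<Sum>i\<le>degree p. \<kappa> (coeff p i) * u ^ i)"
    by (rule sum.mono_neutral_right) (use assms in \<open>auto simp: coeff_eq_0\<close>)
  then show ?thesis by (simp add: poly_emb_def)
qed

lemma poly_emb_add: "poly_emb (p + q) u = poly_emb p u + poly_emb q u"
proof -
  define N where "N = Suc (max (degree p) (degree q))"
  have "degree (p + q) < N" using degree_add_le_max[of p q] by (simp add: N_def le_imp_less_Suc)
  then show ?thesis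
    by (simp add: poly_emb_eq_sum_lessThan[of _ N] N_def \<kappa>_add algebra_simps sum.distrib less_Suc_eq_le)
qed

lemma poly_emb_smult: "poly_emb (smult c p) u = \<kappa> c * poly_emb p u"
  using degree_smult_le[of c p]
  by (simp add: poly_emb_eq_sum_lessThan[of _ "Suc (degree p)"] \<kappa>_mult algebra_simps sum_distrib_left
      le_imp_less_Suc)

lemma poly_emb_pCons_0: "poly_emb (pCons 0 p) u = u * poly_emb p u"
proof -
  have "poly_emb (pCons 0 p) u = (\<Sum>i<Suc (Suc (degree p)). \<kappa> (coeff (pCons 0 p) i) * u ^ i)"
    by (rule poly_emb_eq_sum_lessThan) (simp add: degree_pCons_le le_imp_less_Suc)
  also have "\<dots> = (\<Sum>i<Suc (degree p). \<kappa> (coeff p i) * u ^ Suc i)"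
    by (subst sum.lessThan_Suc_shift) simp
  also have "\<dots> = u * poly_emb p u"
    by (simp add: poly_emb_eq_sum_lessThan[of p "Suc (degree p)"] sum_distrib_left algebra_simps)
  finally show ?thesis .
qed

lemma poly_emb_linear_factor: "poly_emb ([:- c, 1:] * q) u = (u - \<kappa> c) * poly_emb q u"
proof -
  have "[:- c, 1:] * q = smult (- c) q + pCons 0 q" by simp
  then show ?thesis
    by (simp only: poly_emb_add poly_emb_smult poly_emb_pCons_0) (simp add: \<kappa>_minus algebra_simps)
qed

lemma poly_emb_unit:
  assumes k: "alg_closed_type TYPE('k)" and u: "\<And>c. u - \<kappa> c \<noteq> 0 \<and> w (u - \<kappa> c) = 0"
  shows "p \<noteq> 0 \<Longrightarrow> poly_emb p u \<noteq> 0 \<and> w (poly_emb p u) = 0"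
proof (induction "degree p" arbitrary: p rule: less_induct)
  case less
  show ?case
  proof (cases "degree p = 0")
    case True
    then obtain c where p: "p = [:c:]" by (metis degree_eq_zeroE)
    then have "c \<noteq> 0" using less.prems by simp
    then show ?thesis by (simp add: p poly_emb_def \<kappa>_nonzero w_\<kappa>)
  next
    case False
    then obtain x where "poly p x = 0" using k unfolding alg_closed_type_def by blast
    then obtain q where pq: "p = [:- x, 1:] * q" by (metis dvdE poly_eq_0_iff_dvd)
    with less.prems have q0: "q \<noteq> 0" by auto
    have "degree p = degree [:- x, 1:] + degree q"
      unfolding pq by (rule degree_mult_eq) (use q0 in simp_all)
    then have "degree q < degree p" by simp
    with less.hyps q0 have "poly_emb q u \<noteq> 0 \<and> w (poly_emb q u) = 0" by blast
    then show ?thesis unfolding pq poly_emb_linear_factor using u[of x] by (simp add: w_mult)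
  qed
qed

definition transcendental_ratio :: "'L \<Rightarrow> 'L \<Rightarrow> bool" where
  "transcendental_ratio Y1 Y2 \<longleftrightarrow> w Y1 = w Y2 \<and>
     (\<forall>c. c \<noteq> 0 \<longrightarrow> Y2 - \<kappa> c * Y1 \<noteq> 0 \<and> w (Y2 - \<kappa> c * Y1) = w Y1)"

lemma transcendental_ratio_commute:
  assumes "transcendental_ratio Y1 Y2"
  shows "transcendental_ratio Y2 Y1"
proof -
  have "Y1 - \<kappa> c * Y2 \<noteq> 0 \<and> w (Y1 - \<kappa> c * Y2) = w Y2" if c: "c \<noteq> 0" for c
  proof -
    have "Y1 - \<kappa> c * Y2 = - \<kappa> c * (Y2 - \<kappa> (inverse c) * Y1)"
      using c by (simp add: algebra_simps flip: \<kappa>_mult)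
    moreover have "Y2 - \<kappa> (inverse c) * Y1 \<noteq> 0 \<and> w (Y2 - \<kappa> (inverse c) * Y1) = w Y1"
      using assms c by (simp add: transcendental_ratio_def)
    ultimately show ?thesis using c assms by (simp add: w_mult \<kappa>_nonzero w_\<kappa> transcendental_ratio_def)
  qed
  then show ?thesis using assms by (simp add: transcendental_ratio_def)
qed

lemma transcendental_ratio_units:
  assumes "Y1 \<noteq> 0" "Y2 \<noteq> 0" "transcendental_ratio Y1 Y2"
  shows "Y2 / Y1 - \<kappa> c \<noteq> 0 \<and> w (Y2 / Y1 - \<kappa> c) = 0"
proof (cases "c = 0")
  case False
  have "Y2 / Y1 - \<kappa> c = (Y2 - \<kappa> c * Y1) / Y1" using assms(1) by (simp add: field_simps)
  then show ?thesis using assms False by (simp add: transcendental_ratio_def w_divide)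
qed (use assms in \<open>simp add: transcendental_ratio_def w_divide\<close>)

definition initial_poly :: "'k fps fps \<Rightarrow> 'k poly" where
  "initial_poly f = (\<Sum>j\<le>ord2 f. monom (f $ j $ (ord2 f - j)) j)"

lemma coeff_initial_poly: "coeff (initial_poly f) j = (if j \<le> ord2 f then f $ j $ (ord2 f - j) else 0)"
  by (simp add: initial_poly_def coeff_sum coeff_monom)

lemma degree_initial_poly_le: "degree (initial_poly f) \<le> ord2 f"
  by (simp add: degree_le coeff_initial_poly)

lemma initial_poly_nonzero:
  assumes "f \<noteq> 0"
  shows "initial_poly f \<noteq> 0"
proof -
  obtain i j where "i + j = ord2 f" "f $ j $ i \<noteq> 0" using ord2_nonzero_coeff[OF assms] by blast
  then have "coeff (initial_poly f) j \<noteq> 0" by (auto simp: coeff_initial_poly simp flip: \<open>i + j = ord2 f\<close>)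
  then show ?thesis by auto
qed

lemma partial_sum_ord2_eq_initial_poly:
  assumes "Y1 \<noteq> 0"
  shows "partial_sum Y1 Y2 f (ord2 f) = Y1 ^ ord2 f * poly_emb (initial_poly f) (Y2 / Y1)"
proof -
  define d where "d = ord2 f"
  have "partial_sum Y1 Y2 f d = (\<Sum>q\<in>(\<lambda>j. (d - j, j)) ` {..d}. ps_term Y1 Y2 f q)"
    unfolding partial_sum_def
  proof (rule sum.mono_neutral_right)
    show "\<forall>q\<in>exps_upto d - (\<lambda>j. (d - j, j)) ` {..d}. ps_term Y1 Y2 f q = 0"
    proof
      fix q assume "q \<in> exps_upto d - (\<lambda>j. (d - j, j)) ` {..d}"
      then have "fst q + snd q < d"
        by (cases q) (auto simp: exps_upto_def image_iff le_less)
      then show "ps_term Y1 Y2 f q = 0" by (intro ps_term_eq_0 nth_nth_eq_0_if_less_ord2) (simp add: d_def)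
    qed
  next
    show "(\<lambda>j. (d - j, j)) ` {..d} \<subseteq> exps_upto d" by (auto simp: exps_upto_def)
  qed simp
  also have "\<dots> = (\<Sum>j\<le>d. ps_term Y1 Y2 f (d - j, j))"
    by (subst sum.reindex) (auto simp: inj_on_def)
  also have "\<dots> = (\<Sum>j\<le>d. Y1 ^ d * (\<kappa> (coeff (initial_poly f) j) * (Y2 / Y1) ^ j))"
  proof (rule sum.cong[OF refl])
    fix j assume "j \<in> {..d}"
    then have "j \<le> d" by simp
    moreover from this have "Y1 ^ d = Y1 ^ (d - j) * Y1 ^ j" by (simp flip: power_add)
    ultimately show "ps_term Y1 Y2 f (d - j, j) = Y1 ^ d * (\<kappa> (coeff (initial_poly f) j) * (Y2 / Y1) ^ j)"
      using assms by (simp add: ps_term_def coeff_initial_poly d_def power_divide field_simps)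
  qed
  also have "\<dots> = Y1 ^ d * poly_emb (initial_poly f) (Y2 / Y1)"
    using degree_initial_poly_le[of f]
    by (simp add: sum_distrib_left poly_emb_eq_sum_lessThan[of _ "Suc d"] lessThan_Suc_atMost d_def)
  finally show ?thesis by (simp add: d_def)
qed

lemma w_ps_subst_eq_ord2:
  assumes k: "alg_closed_type TYPE('k)"
    and Y: "Y1 \<noteq> 0" "Y2 \<noteq> 0" "1 \<le> w Y1" "transcendental_ratio Y1 Y2" and f: "f \<noteq> 0"
  shows "ps_subst Y1 Y2 f \<noteq> 0 \<and> w (ps_subst Y1 Y2 f) = w Y1 * int (ord2 f)"
proof -
  let ?P = "partial_sum Y1 Y2 f (ord2 f)"
  have vals: "vals_ge Y1 Y2 (w Y1)"
    using Y by (simp add: vals_ge_def vge_def transcendental_ratio_def)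
  have "poly_emb (initial_poly f) (Y2 / Y1) \<noteq> 0 \<and> w (poly_emb (initial_poly f) (Y2 / Y1)) = 0"
    by (rule poly_emb_unit[OF k transcendental_ratio_units[OF Y(1,2,4)] initial_poly_nonzero[OF f]])
  then have P: "?P \<noteq> 0 \<and> w ?P = w Y1 * int (ord2 f)"
    using Y(1) by (simp add: partial_sum_ord2_eq_initial_poly w_mult w_power)
  have "vge w (ps_subst Y1 Y2 f - ?P) (w Y1 * int (ord2 f + 1))"
    by (rule ps_subst_approx[OF vals])
  then have "vge w (ps_subst Y1 Y2 f - ?P) (w ?P + 1)"
    by (rule vge_mono) (use P Y(3) in \<open>simp add: algebra_simps\<close>)
  from w_add_dominated[OF conjunct1[OF P] this] show ?thesis using P by simp
qed

lemma range_ps_subst_closed: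
  assumes vals: "vals_ge Y1 Y2 m"
    and exact: "\<And>f. f \<noteq> 0 \<Longrightarrow> ps_subst Y1 Y2 f \<noteq> 0 \<and> w (ps_subst Y1 Y2 f) = m * int (ord2 f)"
    and approx: "\<And>N. \<exists>f. vge w (z - ps_subst Y1 Y2 f) N"
  shows "z \<in> range (ps_subst Y1 Y2)"
proof -
  have m1: "1 \<le> m" using vals by (simp add: vals_ge_def)
  have "\<forall>N. \<exists>f. vge w (z - ps_subst Y1 Y2 f) (m * int N)" using approx by blast
  then obtain F where F: "\<And>N. vge w (z - ps_subst Y1 Y2 (F N)) (m * int N)"
    by metis
  have agree: "F N $ j $ i = F M $ j $ i" if "N \<le> M" "i + j < N" for N M i j
  proof (rule ccontr)
    assume ne: "F N $ j $ i \<noteq> F M $ j $ i"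
    then have g0: "F N - F M \<noteq> 0" by auto
    have "vge w (z - ps_subst Y1 Y2 (F M)) (m * int N)"
      using F[of M] that(1) m1 by (elim vge_mono) (simp add: mult_left_mono)
    then have "vge w ((z - ps_subst Y1 Y2 (F M)) - (z - ps_subst Y1 Y2 (F N))) (m * int N)"
      using F[of N] by (rule vge_diff)
    then have "m * int N \<le> m * int (ord2 (F N - F M))"
      using exact[OF g0] by (simp add: ps_subst_diff[OF vals] vge_def)
    then have "N \<le> ord2 (F N - F M)" using m1 by simp
    moreover have "ord2 (F N - F M) \<le> i + j" by (rule ord2_le) (use ne in simp)
    ultimately show False using that(2) by simp
  qed
  define f where "f = Abs_fps (\<lambda>j. Abs_fps (\<lambda>i. F (i + j + 1) $ j $ i))"
  have "vge w (z - ps_subst Y1 Y2 f) N" for N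
  proof -
    have "vge w (ps_subst Y1 Y2 (f - F (nat N))) (m * int (nat N))"
      by (rule ps_subst_vge_if_low_coeffs_zero[OF vals]) (simp add: f_def agree)
    from vge_diff[OF F this] have "vge w (z - ps_subst Y1 Y2 f) (m * int (nat N))"
      by (simp add: ps_subst_diff[OF vals])
    then show ?thesis
      by (rule vge_mono) (use m1 in \<open>simp add: mult_le_cancel_right1 le_trans[OF _ mult_left_mono]\<close>)
  qed
  then have "z = ps_subst Y1 Y2 f" by (rule eq_if_vge_diff)
  then show ?thesis by (rule range_eqI)
qed

lemma expansion_with_remainder:
  assumes expand: "\<And>u. P u \<Longrightarrow> \<exists>c u'. P u' \<and> u = t * (\<kappa> c + u')" and "P x"
  shows "\<exists>C U. \<forall>n. P (U n) \<and> x = (\<Sum>i<n. \<kappa> (C i) * t ^ Suc i) + t ^ n * U n"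
proof -
  have "\<forall>u. \<exists>d. P u \<longrightarrow> P (snd d) \<and> u = t * (\<kappa> (fst d) + snd d)"
    using expand by fastforce
  then obtain next_digit where next_digit:
    "\<And>u. P u \<Longrightarrow> P (snd (next_digit u)) \<and> u = t * (\<kappa> (fst (next_digit u)) + snd (next_digit u))"
    by metis
  define U where "U n = ((snd \<circ> next_digit) ^^ n) x" for n
  define C where "C n = fst (next_digit (U n))" for n
  have PU: "P (U n)" for n
    by (induction n) (simp_all add: U_def next_digit \<open>P x\<close>)
  have "x = (\<Sum>i<n. \<kappa> (C i) * t ^ Suc i) + t ^ n * U n" for n
  proof (induction n)
    case (Suc n)
    have "U n = t * (\<kappa> (C n) + U (Suc n))"
      using next_digit[OF PU[of n]] by (simp add: C_def U_def)
    then have "t ^ n * U n = \<kappa> (C n) * t ^ Suc n + t ^ Suc n * U (Suc n)"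
      by (simp add: algebra_simps)
    then show ?case using Suc.IH by (simp add: add.assoc)
  qed (simp add: U_def)
  with PU show ?thesis by blast
qed

lemma range_ps_subst1_if_expandable:
  assumes t: "t \<noteq> 0" "1 \<le> w t"
    and expand: "\<And>u. P u \<Longrightarrow> \<exists>c u'. P u' \<and> u = t * (\<kappa> c + u')"
    and pos: "\<And>u. P u \<Longrightarrow> vge w u 1"
    and "P x"
  shows "x \<in> range (ps_subst1 t)"
proof -
  obtain C U where CU: "\<And>n. P (U n)" "\<And>n. x = (\<Sum>i<n. \<kappa> (C i) * t ^ Suc i) + t ^ n * U n"
    using expansion_with_remainder[OF expand \<open>P x\<close>] by blast
  define \<Phi> where "\<Phi> = Abs_fps (\<lambda>i. if i = 0 then 0 else C (i - 1))"
  have vals: "vals_ge t 0 1" using t by (simp add: vals_ge_def vge_def)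
  have "x = ps_subst1 t \<Phi>"
    unfolding ps_subst1_def
  proof (rule ps_subst_eqI[OF vals])
    fix n
    have "partial_sum t 0 (fps_const \<Phi>) n = (\<Sum>i<Suc n. \<kappa> (\<Phi> $ i) * t ^ i)"
      by (simp add: partial_sum_const lessThan_Suc_atMost)
    also have "\<dots> = (\<Sum>i<n. \<kappa> (C i) * t ^ Suc i)"
      by (subst sum.lessThan_Suc_shift) (simp add: \<Phi>_def)
    finally have "x - partial_sum t 0 (fps_const \<Phi>) n = t ^ n * U n"
      by (subst CU(2)[of n]) simp
    moreover have "vge w (t ^ n * U n) (int n * 1 + 1)"
      using t pos[OF CU(1)] by (intro vge_mult vge_power) (simp add: vge_def)
    ultimately show "vge w (x - partial_sum t 0 (fps_const \<Phi>) n) (int (n + 1))"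
      by (simp add: add.commute)
  qed
  then show ?thesis by blast
qed

lemma exists_const_raising_value:
  assumes "x \<noteq> 0" "u \<noteq> 0" "w x \<le> w u" "\<not> transcendental_ratio x u"
  shows "\<exists>c. u - \<kappa> c * x = 0 \<or> w x < w (u - \<kappa> c * x)"
proof (cases "w x < w u")
  case True
  then show ?thesis by (intro exI[of _ 0]) simp
next
  case False
  with assms(3) have eq: "w u = w x" by simp
  with assms(4) obtain c where c: "c \<noteq> 0" "\<not> (u - \<kappa> c * x \<noteq> 0 \<and> w (u - \<kappa> c * x) = w x)"
    by (auto simp: transcendental_ratio_def)
  show ?thesis
  proof (intro exI[of _ c], cases "u - \<kappa> c * x = 0")
    case False
    with c(2) have "w (u - \<kappa> c * x) \<noteq> w x" by simp
    moreover have "min (w u) (w x) \<le> w (u - \<kappa> c * x)"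
      using w_diff_\<kappa>_mult_ge_min[OF assms(1,2) c(1) False] .
    ultimately show "u - \<kappa> c * x = 0 \<or> w x < w (u - \<kappa> c * x)" using eq by simp
  qed simp
qed

lemma in_range_ps_subst1_if_never_transcendental:
  fixes Good :: "'L \<Rightarrow> 'L \<Rightarrow> bool"
  assumes monoidal: "\<And>a b. Good a b \<Longrightarrow> w a < w b \<Longrightarrow> Good a (b / a)"
    and coord: "\<And>a b c. Good a b \<Longrightarrow> c \<noteq> 0 \<Longrightarrow> b - \<kappa> c * a \<noteq> 0 \<Longrightarrow> Good a (b - \<kappa> c * a)"
    and never: "\<And>a b. Good a b \<Longrightarrow> a \<noteq> 0 \<and> b \<noteq> 0 \<and> m \<le> w a \<and> m \<le> w b \<and> \<not> transcendental_ratio a b"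
    and start: "Good x1 x2" "w x1 = m" "1 \<le> m"
  shows "x2 \<in> range (ps_subst1 x1)"
proof (rule range_ps_subst1_if_expandable[where P = "\<lambda>u. u = 0 \<or> Good x1 u"])
  have x1: "x1 \<noteq> 0" using never[OF start(1)] by simp
  show "x1 \<noteq> 0" "1 \<le> w x1" using x1 start by simp_all
  show "vge w u 1" if "u = 0 \<or> Good x1 u" for u
    using that never[of x1 u] start(3) by (auto simp: vge_def)
  show "x2 = 0 \<or> Good x1 x2" using start(1) by simp
  show "\<exists>c u'. (u' = 0 \<or> Good x1 u') \<and> u = x1 * (\<kappa> c + u')" if "u = 0 \<or> Good x1 u" for u
  proof (cases "u = 0")
    case False
    with that have u: "Good x1 u" by simp
    obtain c where c: "u - \<kappa> c * x1 = 0 \<or> w x1 < w (u - \<kappa> c * x1)"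
      using exists_const_raising_value[of x1 u] x1 never[OF u] start(2) by auto
    have "Good x1 (u - \<kappa> c * x1)" if "u - \<kappa> c * x1 \<noteq> 0"
      using u coord[OF u _ that] by (cases "c = 0") simp_all
    then have "(u - \<kappa> c * x1) / x1 = 0 \<or> Good x1 ((u - \<kappa> c * x1) / x1)"
      using c monoidal by auto
    moreover have "u = x1 * (\<kappa> c + (u - \<kappa> c * x1) / x1)" using x1 by (simp add: field_simps)
    ultimately show ?thesis by blast
  qed (intro exI[of _ 0], simp)
qed

end

section \<open>The completion of K_2\<close>

locale R2_completion =
  fixes v :: "'k::field_char_0 fps fps \<Rightarrow> int"
    and \<iota> :: "'k fps fps \<Rightarrow> 'L::field"
    and w :: "'L \<Rightarrow> int"
  assumes discrete: "discrete_val_R2 v"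
    and completion: "is_completion v \<iota> w"
begin

lemma \<iota>_zero [simp]: "\<iota> 0 = 0"
  and \<iota>_one [simp]: "\<iota> 1 = 1"
  and \<iota>_add [simp]: "\<iota> (f + g) = \<iota> f + \<iota> g"
  and \<iota>_mult [simp]: "\<iota> (f * g) = \<iota> f * \<iota> g"
  and inj_\<iota>: "inj \<iota>"
  and w_\<iota>: "f \<noteq> 0 \<Longrightarrow> w (\<iota> f) = v f"
  using completion unfolding is_completion_def by blast+

lemma \<iota>_minus [simp]: "\<iota> (- f) = - \<iota> f"
  using \<iota>_add[of "- f" f] by (simp add: eq_neg_iff_add_eq_0)

lemma \<iota>_diff [simp]: "\<iota> (f - g) = \<iota> f - \<iota> g"
  using \<iota>_add[of f "- g"] by simp

lemma \<iota>_power [simp]: "\<iota> (f ^ n) = \<iota> f ^ n"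
  by (induction n) simp_all

lemma \<iota>_sum: "\<iota> (sum f A) = (\<Sum>x\<in>A. \<iota> (f x))"
  by (induction A rule: infinite_finite_induct) simp_all

lemma \<iota>_eq_0_iff [simp]: "\<iota> f = 0 \<longleftrightarrow> f = 0"
  using inj_\<iota> \<iota>_zero by (metis injD)

lemma v_const: "c \<noteq> 0 \<Longrightarrow> v (fps_const (fps_const c)) = 0"
  and v_nonneg: "f \<noteq> 0 \<Longrightarrow> 0 \<le> v f"
  and v_pos_iff: "f \<noteq> 0 \<Longrightarrow> 0 < v f \<longleftrightarrow> f $ 0 $ 0 = 0"
  using discrete unfolding discrete_val_R2_def by blast+

text \<open>A named constant rather than a lambda, so that rewriting with equations about \<iota> cannot
  reach inside the locale parameter of ps_subst.\<close>
definition \<kappa> :: "'k \<Rightarrow> 'L" where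
  "\<kappa> c = \<iota> (fps_const (fps_const c))"

sublocale complete_valued_field w \<kappa>
proof unfold_locales
  show "is_valuation w" and "v_cauchy w s \<Longrightarrow> \<exists>l. v_conv w s l" for s
    using completion unfolding is_completion_def by blast+
  show "c \<noteq> 0 \<Longrightarrow> w (\<kappa> c) = 0" for c
    by (simp add: \<kappa>_def w_\<iota> v_const)
qed (simp_all add: \<kappa>_def flip: fps_const_add fps_const_mult)

lemma w_\<iota>_X1_pos: "1 \<le> w (\<iota> X1)" and w_\<iota>_X2_pos: "1 \<le> w (\<iota> X2)"
  using v_pos_iff[of X1] v_pos_iff[of X2] by (simp_all add: w_\<iota>)

lemma vge_\<iota>_if_low_coeffs_zero:
  "(\<And>i j. i + j < N \<Longrightarrow> h $ j $ i = 0) \<Longrightarrow> vge w (\<iota> h) (int N)"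
proof (induction N arbitrary: h)
  case 0
  then show ?case by (cases "h = 0") (simp_all add: vge_def w_\<iota> v_nonneg)
next
  case (Suc N)
  \<comment> \<open>h = X1 A + X2 B, where A collects the terms of h free of X2.\<close>
  define A where "A = fps_const (fps_shift 1 (h $ 0))"
  define B where "B = fps_shift 1 h"
  have h00: "h $ 0 $ 0 = 0" using Suc.prems[of 0 0] by simp
  have h: "h = X1 * A + X2 * B"
  proof (rule fps_ext)
    fix j
    show "h $ j = (X1 * A + X2 * B) $ j"
      by (cases j) (auto simp: A_def B_def h00 intro: fps_ext)
  qed
  have "vge w (\<iota> X1 * \<iota> A) (1 + int N)"
    using w_\<iota>_X1_pos by (intro vge_mult Suc.IH) (auto simp: vge_def A_def intro: Suc.prems)
  moreover have "vge w (\<iota> X2 * \<iota> B) (1 + int N)"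
    using w_\<iota>_X2_pos by (intro vge_mult Suc.IH) (auto simp: vge_def B_def intro: Suc.prems)
  ultimately show ?case by (subst h) (simp add: vge_add)
qed

lemma ps_eval_ps_subst:
  assumes "vals_ge Y1 Y2 m"
  shows "ps_eval \<iota> w Y1 Y2 f (ps_subst Y1 Y2 f)"
proof -
  have "partial_sum Y1 Y2 f =
      (\<lambda>n. \<Sum>i\<le>n. \<Sum>j\<le>n - i. \<iota> (fps_const (fps_const (f $ j $ i))) * Y1 ^ i * Y2 ^ j)"
    by (simp add: fun_eq_iff partial_sum_eq_double_sum ps_term_def \<kappa>_def)
  then show ?thesis unfolding ps_eval_def by (metis ps_subst_limit[OF assms])
qed

lemma \<iota>_approx_in_alg_gen: "\<exists>x\<in>alg_gen (\<iota> X1) (\<iota> X2). vge w (\<iota> a - x) (int (N + 1))"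
proof
  define T where
    "T = (\<Sum>p\<in>exps_upto N. fps_const (fps_const (a $ snd p $ fst p) * fps_X ^ fst p) * fps_X ^ snd p)"
  have "T $ j $ i = (if i + j \<le> N then a $ j $ i else 0)" for i j
  proof -
    have "T $ j $ i = (\<Sum>p\<in>exps_upto N. if p = (i, j) then a $ j $ i else 0)"
      unfolding T_def fps_sum_nth by (rule sum.cong[OF refl]) (auto simp: fps_X_power_mult_right_nth)
    also have "\<dots> = (if i + j \<le> N then a $ j $ i else 0)"
      by (subst sum.delta[OF finite_exps_upto]) (simp add: exps_upto_def)
    finally show ?thesis .
  qed
  then show "vge w (\<iota> a - \<iota> T) (int (N + 1))"
    using vge_\<iota>_if_low_coeffs_zero[of "N + 1" "a - T"] by simp
  have "\<iota> (fps_const (fps_const x * fps_X ^ i) * fps_X ^ j) = \<kappa> x * \<iota> X1 ^ i * \<iota> X2 ^ j" for x i j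
    by (simp add: \<kappa>_def flip: fps_const_mult fps_const_power)
  then show "\<iota> T \<in> alg_gen (\<iota> X1) (\<iota> X2)"
    unfolding T_def \<iota>_sum by (auto intro!: alg_gen_sum alg_gen_power alg_gen.intros)
qed

lemma \<iota>_in_range_ps_subst:
  assumes k: "alg_closed_type TYPE('k)"
    and Y: "Y1 \<noteq> 0" "Y2 \<noteq> 0" "1 \<le> w Y1" "transcendental_ratio Y1 Y2"
    and gen: "\<iota> X1 \<in> alg_gen Y1 Y2" "\<iota> X2 \<in> alg_gen Y1 Y2"
  shows "\<iota> a \<in> range (ps_subst Y1 Y2)"
proof (rule range_ps_subst_closed)
  show vals: "vals_ge Y1 Y2 (w Y1)"
    using Y by (simp add: vals_ge_def vge_def transcendental_ratio_def)
  show "ps_subst Y1 Y2 f \<noteq> 0 \<and> w (ps_subst Y1 Y2 f) = w Y1 * int (ord2 f)" if "f \<noteq> 0" for f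
    by (rule w_ps_subst_eq_ord2[OF k Y that])
  show "\<exists>f. vge w (\<iota> a - ps_subst Y1 Y2 f) N" for N
  proof -
    obtain x where "x \<in> alg_gen (\<iota> X1) (\<iota> X2)" and x: "vge w (\<iota> a - x) (int (nat N + 1))"
      using \<iota>_approx_in_alg_gen by blast
    then have "x \<in> range (ps_subst Y1 Y2)"
      using alg_gen_mono[OF gen] alg_gen_subset_range_ps_subst[OF vals] by blast
    moreover have "vge w (\<iota> a - x) N" using x by (rule vge_mono) simp
    ultimately show ?thesis by blast
  qed
qed

text \<open>Truncating c at degree n, both sides are congruent to the same polynomial in \<iota> X1 modulo
  elements of value at least n + 1.\<close>
lemma \<iota>_const_eq_ps_subst1_compose:
  assumes t: "vals_ge t 0 m" and G1: "\<iota> X1 = ps_subst1 t G1" "G1 $ 0 = 0"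
  shows "\<iota> (fps_const c) = ps_subst1 t (c oo G1)"
proof (rule eq_if_vge_diff)
  fix N :: int
  define n where "n = nat N"
  define P where "P = (\<Sum>i\<le>n. fps_const (c $ i) * fps_X ^ i)"
  define z where "z = (\<Sum>i\<le>n. \<kappa> (c $ i) * \<iota> X1 ^ i)"
  have "P $ i = (if i \<le> n then c $ i else 0)" for i
    by (simp add: P_def fps_sum_rep_nth atLeast0AtMost flip: atLeast0AtMost)
  then have "vge w (\<iota> (fps_const c - fps_const P)) (int (n + 1))"
    by (intro vge_\<iota>_if_low_coeffs_zero) auto
  moreover have "\<iota> (fps_const P) = z"
    by (simp add: P_def z_def \<iota>_sum fps_const_sum \<kappa>_def flip: fps_const_mult fps_const_power)
  ultimately have lhs: "vge w (\<iota> (fps_const c) - z) (int (n + 1))" by (metis \<iota>_diff)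
  have "(c oo G1) $ i = (\<Sum>k\<le>n. fps_const (c $ k) * G1 ^ k) $ i" if "i < n + 1" for i
  proof -
    have "(c oo G1) $ i = (\<Sum>k=0..i. c $ k * (G1 ^ k) $ i)" by (rule fps_compose_nth)
    also have "\<dots> = (\<Sum>k\<le>n. c $ k * (G1 ^ k) $ i)"
      by (rule sum.mono_neutral_left) (use that fps_power_nth_eq_0_if_less[OF G1(2)] in auto)
    finally show ?thesis by (simp add: fps_sum_nth)
  qed
  then have "vge w (ps_subst1 t ((c oo G1) - (\<Sum>k\<le>n. fps_const (c $ k) * G1 ^ k))) (m * int (n + 1))"
    by (intro ps_subst1_vge_if_low_coeffs_zero[OF t]) simp
  moreover have "ps_subst1 t (\<Sum>k\<le>n. fps_const (c $ k) * G1 ^ k) = z"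
    by (simp add: z_def G1(1) ps_subst1_sum[OF t] ps_subst1_mult[OF t] ps_subst1_power[OF t]
        ps_subst1_const[OF t])
  ultimately have "vge w (ps_subst1 t (c oo G1) - z) (int (n + 1))"
    using t by (simp add: ps_subst1_diff[OF t]) (erule vge_mono, simp add: vals_ge_def mult_le_cancel_right1)
  from vge_diff[OF lhs this] show "vge w (\<iota> (fps_const c) - ps_subst1 t (c oo G1)) N"
    by (simp add: n_def vge_mono)
qed

text \<open>X1 and X2 are algebraically independent over k, whereas two power series in one variable
  are algebraically dependent.\<close>
lemma coordinates_not_in_range_ps_subst1:
  assumes k: "alg_closed_type TYPE('k)" and t: "vals_ge t 0 m"
    and X: "\<iota> X1 \<in> range (ps_subst1 t)" "\<iota> X2 \<in> range (ps_subst1 t)"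
  shows False
proof -
  obtain G1 G2 where G: "\<iota> X1 = ps_subst1 t G1" "\<iota> X2 = ps_subst1 t G2"
    using X by (elim rangeE)
  have G1_0: "G1 $ 0 = 0"
  proof (rule ccontr)
    assume "G1 $ 0 \<noteq> 0"
    then have "w (ps_subst1 t G1) = 0" using w_ps_subst1_unit[OF t] by blast
    with G(1) w_\<iota>_X1_pos show False by simp
  qed
  have G1_nz: "G1 \<noteq> 0"
  proof
    assume "G1 = 0"
    then have "\<iota> X1 = 0" unfolding G(1) by (rule ssubst) (rule ps_subst1_zero[OF t])
    then show False by simp
  qed
  obtain c where c: "(\<exists>j\<le>subdegree G1. c j \<noteq> 0) \<and> (\<Sum>j\<le>subdegree G1. (c j oo G1) * G2 ^ j) = 0"
    using fps_algebraic_over_compose[OF k G1_0 G1_nz, of G2] by (elim exE) (rule that)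
  define F where "F = (\<Sum>j\<le>subdegree G1. fps_const (c j) * X2 ^ j)"
  have "\<iota> F = (\<Sum>j\<le>subdegree G1. \<iota> (fps_const (c j)) * \<iota> X2 ^ j)"
    by (simp add: F_def \<iota>_sum)
  also have "\<dots> = (\<Sum>j\<le>subdegree G1. ps_subst1 t (c j oo G1) * ps_subst1 t G2 ^ j)"
    unfolding G(2) \<iota>_const_eq_ps_subst1_compose[OF t G(1) G1_0] ..
  also have "\<dots> = ps_subst1 t (\<Sum>j\<le>subdegree G1. (c j oo G1) * G2 ^ j)"
    by (simp only: ps_subst1_sum[OF t] ps_subst1_mult[OF t] ps_subst1_power[OF t])
  finally have "F = 0" using conjunct2[OF c] ps_subst1_zero[OF t] by simp
  moreover obtain j where j: "j \<le> subdegree G1" "c j \<noteq> 0" using conjunct1[OF c] by blast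
  moreover have "F $ j = c j"
  proof -
    have "F $ j = (\<Sum>j'\<le>subdegree G1. if j' = j then c j' else 0)"
      unfolding F_def fps_sum_nth by (rule sum.cong[OF refl]) (auto simp: fps_X_power_mult_right_nth)
    then show ?thesis using j(1) by simp
  qed
  ultimately show False by simp
qed

definition admissible :: "'L \<Rightarrow> 'L \<Rightarrow> bool" where
  "admissible a b \<longleftrightarrow> a \<noteq> 0 \<and> b \<noteq> 0 \<and> 1 \<le> w a \<and> 1 \<le> w b \<and>
     \<iota> X1 \<in> alg_gen a b \<and> \<iota> X2 \<in> alg_gen a b \<and> (transf w)\<^sup>*\<^sup>* (\<iota> X1, \<iota> X2) (a, b)"

lemma admissible_start: "admissible (\<iota> X1) (\<iota> X2)"
  using w_\<iota>_X1_pos w_\<iota>_X2_pos by (simp add: admissible_def alg_gen.intros)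

lemma admissible_step:
  assumes "admissible a b" "transf w (a, b) (a', b')"
    and "a' \<noteq> 0" "b' \<noteq> 0" "1 \<le> w a'" "1 \<le> w b'" "a \<in> alg_gen a' b'" "b \<in> alg_gen a' b'"
  shows "admissible a' b'"
  using assms alg_gen_mono[of a a' b' b] unfolding admissible_def by auto

lemma admissible_monoidal1:
  assumes ab: "admissible a b" and lt: "w a < w b"
  shows "admissible a (b / a)"
proof (rule admissible_step[OF ab])
  have a: "a \<noteq> 0" "b \<noteq> 0" "1 \<le> w a" using ab by (auto simp: admissible_def)
  show "transf w (a, b) (a, b / a)" using a(1,2) lt by (rule transf.monoidal1)
  show "a \<noteq> 0" "b / a \<noteq> 0" "1 \<le> w a" "1 \<le> w (b / a)" using a lt by (simp_all add: w_divide)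
  show "a \<in> alg_gen a (b / a)" by (rule alg_gen_fst)
  have "a * (b / a) \<in> alg_gen a (b / a)" by (intro alg_gen_mult alg_gen_fst alg_gen_snd)
  then show "b \<in> alg_gen a (b / a)" using a by simp
qed

lemma admissible_monoidal2:
  assumes ab: "admissible a b" and lt: "w b < w a"
  shows "admissible (a / b) b"
proof (rule admissible_step[OF ab])
  have b: "a \<noteq> 0" "b \<noteq> 0" "1 \<le> w b" using ab by (auto simp: admissible_def)
  show "transf w (a, b) (a / b, b)" using b(1,2) lt by (rule transf.monoidal2)
  show "a / b \<noteq> 0" "b \<noteq> 0" "1 \<le> w (a / b)" "1 \<le> w b" using b lt by (simp_all add: w_divide)
  show "b \<in> alg_gen (a / b) b" by (rule alg_gen_snd)
  have "(a / b) * b \<in> alg_gen (a / b) b" by (intro alg_gen_mult alg_gen_fst alg_gen_snd)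
  then show "a \<in> alg_gen (a / b) b" using b by simp
qed

lemma admissible_coord1:
  assumes ab: "admissible a b" and c: "c \<noteq> 0" and nz: "b - \<kappa> c * a \<noteq> 0"
  shows "admissible a (b - \<kappa> c * a)"
proof (rule admissible_step[OF ab])
  let ?c = "\<kappa> c"
  have a: "a \<noteq> 0" "b \<noteq> 0" "1 \<le> w a" "1 \<le> w b" using ab by (auto simp: admissible_def)
  show "transf w (a, b) (a, b - ?c * a)"
    using c by (intro transf.coord1) (simp_all add: w_\<kappa> \<kappa>_nonzero)
  show "1 \<le> w (b - ?c * a)"
    using w_diff_\<kappa>_mult_ge_min[OF a(1,2) c nz] a by linarith
  show "a \<noteq> 0" "b - ?c * a \<noteq> 0" "1 \<le> w a" using a nz by simp_all
  show "a \<in> alg_gen a (b - ?c * a)" by (rule alg_gen_fst)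
  have "(b - ?c * a) + ?c * a \<in> alg_gen a (b - ?c * a)"
    by (intro alg_gen_add alg_gen_mult alg_gen_fst alg_gen_snd alg_gen_const)
  then show "b \<in> alg_gen a (b - ?c * a)" by simp
qed

lemma admissible_coord2:
  assumes ab: "admissible a b" and c: "c \<noteq> 0" and nz: "a - \<kappa> c * b \<noteq> 0"
  shows "admissible (a - \<kappa> c * b) b"
proof (rule admissible_step[OF ab])
  let ?c = "\<kappa> c"
  have a: "a \<noteq> 0" "b \<noteq> 0" "1 \<le> w a" "1 \<le> w b" using ab by (auto simp: admissible_def)
  show "transf w (a, b) (a - ?c * b, b)"
    using c by (intro transf.coord2) (simp_all add: w_\<kappa> \<kappa>_nonzero)
  show "1 \<le> w (a - ?c * b)"
    using w_diff_\<kappa>_mult_ge_min[OF a(2,1) c nz] a by linarith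
  show "a - ?c * b \<noteq> 0" "b \<noteq> 0" "1 \<le> w b" using a nz by simp_all
  show "b \<in> alg_gen (a - ?c * b) b" by (rule alg_gen_snd)
  have "(a - ?c * b) + ?c * b \<in> alg_gen (a - ?c * b) b"
    by (intro alg_gen_add alg_gen_mult alg_gen_fst alg_gen_snd alg_gen_const)
  then show "a \<in> alg_gen (a - ?c * b) b" by simp
qed

lemma exists_admissible_transcendental:
  assumes k: "alg_closed_type TYPE('k)"
  shows "\<exists>a b. admissible a b \<and> transcendental_ratio a b"
proof (rule ccontr)
  assume never: "\<not> (\<exists>a b. admissible a b \<and> transcendental_ratio a b)"
  obtain a b where adm: "admissible a b"
    and least: "\<And>a' b'. admissible a' b' \<Longrightarrow> nat (min (w a) (w b)) \<le> nat (min (w a') (w b'))"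
    using ex_has_least_nat[where P = "\<lambda>(a, b). admissible a b" and k = "(\<iota> X1, \<iota> X2)"
        and m = "\<lambda>(a, b). nat (min (w a) (w b))"] admissible_start by fastforce
  define m where "m = min (w a) (w b)"
  have m1: "1 \<le> m" using adm by (simp add: admissible_def m_def)
  have bounds: "a' \<noteq> 0 \<and> b' \<noteq> 0 \<and> m \<le> w a' \<and> m \<le> w b'" if "admissible a' b'" for a' b'
    using that least[of a' b'] m1 by (auto simp: admissible_def m_def)
  have never': "\<not> transcendental_ratio b' a'" if "admissible a' b'" for a' b'
    using that never transcendental_ratio_commute by blast
  have no_expansion: False
    if "x2 \<in> range (ps_subst1 x1)" "x1 \<noteq> 0" "w x1 = m" "alg_gen x1 x2 = alg_gen a b" for x1 x2
  proof (rule coordinates_not_in_range_ps_subst1[OF k])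
    show vals: "vals_ge x1 0 m" using that m1 by (simp add: vals_ge_def vge_def)
    show "\<iota> X1 \<in> range (ps_subst1 x1)" "\<iota> X2 \<in> range (ps_subst1 x1)"
      using alg_gen_subset_range_ps_subst1[OF vals that(1)] adm that(4) by (auto simp: admissible_def)
  qed
  show False
  proof (cases "w a = m")
    case True
    have "b \<in> range (ps_subst1 a)"
      by (rule in_range_ps_subst1_if_never_transcendental[where Good = admissible and m = m])
        (use admissible_monoidal1 admissible_coord1 bounds never adm True m1 in auto)
    then show False using no_expansion bounds[OF adm] True by blast
  next
    case False
    then have "w b = m" by (simp add: m_def min_def split: if_splits)
    have "a \<in> range (ps_subst1 b)"
      by (rule in_range_ps_subst1_if_never_transcendental[where Good = "\<lambda>a b. admissible b a" and m = m])
        (use admissible_monoidal2 admissible_coord2 bounds never' adm \<open>w b = m\<close> m1 in auto)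
    then show False using no_expansion bounds[OF adm] \<open>w b = m\<close> alg_gen_commute by blast
  qed
qed

lemma w_eq_1_if_value_group_Z:
  assumes k: "alg_closed_type TYPE('k)" and Z: "value_group_Z v"
    and Y: "admissible Y1 Y2" "transcendental_ratio Y1 Y2"
  shows "w Y1 = 1"
proof -
  have Y': "Y1 \<noteq> 0" "Y2 \<noteq> 0" "1 \<le> w Y1" using Y(1) by (simp_all add: admissible_def)
  have vals: "vals_ge Y1 Y2 (w Y1)"
    using Y' Y(2) by (simp add: vals_ge_def vge_def transcendental_ratio_def)
  have v_multiple: "\<exists>d. v f = w Y1 * int d" if "f \<noteq> 0" for f
  proof -
    obtain F where F: "\<iota> f = ps_subst Y1 Y2 F"
      using \<iota>_in_range_ps_subst[OF k Y' Y(2)] Y(1) by (auto simp: admissible_def)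
    moreover from this have "F \<noteq> 0" using that ps_subst_zero[OF vals] by auto
    ultimately show ?thesis using w_ps_subst_eq_ord2[OF k Y' Y(2)] that by (metis w_\<iota>)
  qed
  obtain f g where "f \<noteq> 0" "g \<noteq> 0" "v f = v g + 1" using Z unfolding value_group_Z_def by blast
  then obtain d e where "w Y1 * int d = w Y1 * int e + 1" using v_multiple by metis
  then have "w Y1 * (int d - int e) = 1" by (simp add: algebra_simps)
  then show ?thesis using Y'(3) pos_zmult_eq_1_iff by auto
qed

end

theorem theorem10:
  fixes v :: "'k::field_char_0 fps fps \<Rightarrow> int"
    and \<iota> :: "'k fps fps \<Rightarrow> 'L::field"
    and w :: "'L \<Rightarrow> int"
  assumes "alg_closed_type TYPE('k)"
    and "discrete_val_R2 v"
    and "value_group_Z v"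
    and "is_completion v \<iota> w"
  shows "\<exists>Y1 Y2.
     (transf w)\<^sup>*\<^sup>* (\<iota> X1, \<iota> X2) (Y1, Y2) \<and>
     (\<forall>f. f \<noteq> 0 \<longrightarrow> (\<exists>l. ps_eval \<iota> w Y1 Y2 f l \<and> l \<noteq> 0 \<and> w l = int (ord2 f))) \<and>
     (\<forall>a. \<exists>f g lf lg. g \<noteq> 0 \<and> ps_eval \<iota> w Y1 Y2 f lf \<and> ps_eval \<iota> w Y1 Y2 g lg
                      \<and> \<iota> a * lg = lf)"
proof -
  interpret R2_completion v \<iota> w
    using assms(2,4) by unfold_locales
  obtain Y1 Y2 where Y: "admissible Y1 Y2" "transcendental_ratio Y1 Y2"
    using exists_admissible_transcendental[OF assms(1)] by blast
  have Y': "Y1 \<noteq> 0" "Y2 \<noteq> 0" "1 \<le> w Y1" using Y(1) by (simp_all add: admissible_def)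
  have vals: "vals_ge Y1 Y2 1"
    using Y' Y(2) by (simp add: vals_ge_def vge_def transcendental_ratio_def)
  have w_Y1: "w Y1 = 1" by (rule w_eq_1_if_value_group_Z[OF assms(1,3) Y])
  show ?thesis
  proof (rule exI[of _ Y1], rule exI[of _ Y2], intro conjI allI impI)
    show "(transf w)\<^sup>*\<^sup>* (\<iota> X1, \<iota> X2) (Y1, Y2)" using Y(1) by (simp add: admissible_def)
  next
    fix f :: "'k fps fps"
    assume "f \<noteq> 0"
    then show "\<exists>l. ps_eval \<iota> w Y1 Y2 f l \<and> l \<noteq> 0 \<and> w l = int (ord2 f)"
      using ps_eval_ps_subst[OF vals] w_ps_subst_eq_ord2[OF assms(1) Y' Y(2)] w_Y1 by auto
  next
    fix a
    obtain F where "\<iota> a = ps_subst Y1 Y2 F"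
      using \<iota>_in_range_ps_subst[OF assms(1) Y' Y(2)] Y(1) by (auto simp: admissible_def)
    then show "\<exists>f g lf lg. g \<noteq> 0 \<and> ps_eval \<iota> w Y1 Y2 f lf \<and> ps_eval \<iota> w Y1 Y2 g lg \<and> \<iota> a * lg = lf"
      using ps_eval_ps_subst[OF vals, of F] ps_eval_ps_subst[OF vals, of 1] ps_subst_one[OF vals]
      by (intro exI[of _ F] exI[of _ 1] exI[of _ "\<iota> a"] exI[of _ "1 :: 'L"]) simp
  qed
qed

end
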